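(* Let $\mathfrak{h}$ be either $\mathfrak{sl}_2(\mathbb{R})$ or $\mathfrak{so}(3)$ (viewed as a left Leibniz algebra), and let $\rhd$ be an analytic linear Lie rack structure on $\mathfrak{h}$ such that $[\cdot,\cdot]_{\rhd}$ is the Lie bracket of $\mathfrak{h}$. Then there exists an analytic function $F:\mathbb{R}\to\mathbb{R}$, $F(u)=1+\sum_{k\ge1}a_ku^k$, such that for all $x,y\in\mathfrak{h}$, \[x\rhd y=\exp\big(F(\langle x,x\rangle)\mathrm{ad}_x\big)(y),\qquad \langle x,x\rangle=\tfrac12\mathrm{tr}(\mathrm{ad}_x\circ\mathrm{ad}_x).\] Consequently $\mathfrak{h}$ is rigid.
   Context: $\mathfrak{sl}_2(\mathbb{R})$ is the Lie algebra of traceless real $2\times2$ matrices, $\mathfrak{so}(3)$ that of skew-symmetric real $3\times3$ matrices; $\mathrm{ad}_x(y)=[x,y]$. A linear Lie rack structure on a finite-dimensional real vector space $V$ is a smooth map $\rhd:V\times V\to V$ with each $\mathrm{L}_x:y\mapsto x\rhd y$ a linear bijection, $x\rhd(y\rhd z)=(x\rhd y)\rhd(x\rhd z)$, $x\rhd0=0$ and $\mathrm{L}_0=\mathrm{Id}$; it is analytic if $x\rhd y=y+\sum_{n\ge1}A_{n,1}(x,\ldots,x,y)$ with $A_{n,1}$ $(n+1)$-multilinear and symmetric in the first $n$ arguments. Its associated bracket is $[u,v]_{\rhd}=\frac{d}{dt}\big|_{t=0}\mathrm{L}_{tu}(v)$. A left Leibniz algebra (bracket with $[u,[v,w]]=[[u,v],w]+[v,[u,w]]$)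 is rigid if every analytic linear Lie rack structure $\rhd$ on it with $[\cdot,\cdot]_{\rhd}=[\cdot,\cdot]$ has the form $x\rhd y=\exp(F(P(x,\ldots,x))\mathrm{ad}_x)(y)$ with $F:\mathbb{R}\to\mathbb{R}$ analytic, $F(0)=1$, and $P$ a real symmetric multilinear $p$-form satisfying $\sum_{i=1}^pP(x_1,\ldots,[y,x_i],\ldots,x_p)=0$ for all $y,x_1,\ldots,x_p$. *)

theory Defs
  imports "HOL-Analysis.Analysis"
begin

text \<open>Lie algebras are modelled on real^3 via a fixed basis.
  sl2(R): coordinates w.r.t. the basis H, E, F with [H,E]=2E, [H,F]=-2F, [E,F]=H.
  so(3): coordinates w.r.t. the standard basis L1, L2, L3 of skew matrices, [Li,Lj]=eps_ijk Lk
  (i.e. the cross product).\<close>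

definition sl2_bracket :: "real^3 \<Rightarrow> real^3 \<Rightarrow> real^3" where
  "sl2_bracket x y = vector [x$2 * y$3 - x$3 * y$2,
                             2 * (x$1 * y$2 - x$2 * y$1),
                             2 * (x$3 * y$1 - x$1 * y$3)]"

definition so3_bracket :: "real^3 \<Rightarrow> real^3 \<Rightarrow> real^3" where
  "so3_bracket x y = vector [x$2 * y$3 - x$3 * y$2,
                             x$3 * y$1 - x$1 * y$3,
                             x$1 * y$2 - x$2 * y$1]"

text \<open>C-infinity maps between real normed vector spaces (everywhere defined).\<close>
coinductive smooth_map :: "('a::real_normed_vector \<Rightarrow> 'b::real_normed_vector) \<Rightarrow> bool" where
  "(\<And>x. (f has_derivative f' x) (at x)) \<Longrightarrow> (\<And>v. smooth_map (\<lambda>x. f' x v)) \<Longrightarrow> smooth_map f"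

definition real_analytic :: "(real \<Rightarrow> real) \<Rightarrow> bool" where
  "real_analytic F \<longleftrightarrow> (\<forall>x0. \<exists>r>0. \<exists>c::nat \<Rightarrow> real.
      \<forall>x. \<bar>x - x0\<bar> < r \<longrightarrow> (\<lambda>k. c k * (x - x0) ^ k) sums F x)"

text \<open>An (n+1)-multilinear map A(x_0,...,x_{n-1}, y), symmetric in the first n arguments.
  The first n arguments are given as a function nat => 'a; only indices < n matter.\<close>
definition sym_multilin_map :: "nat \<Rightarrow> ((nat \<Rightarrow> 'a::real_vector) \<Rightarrow> 'a \<Rightarrow> 'b::real_vector) \<Rightarrow> bool" where
  "sym_multilin_map n A \<longleftrightarrow>
     (\<forall>xs y. (\<forall>i<n. linear (\<lambda>t. A (xs(i := t)) y)) \<and> linear (\<lambda>y. A xs y)) \<and>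
     (\<forall>xs ys y. (\<forall>i<n. xs i = ys i) \<longrightarrow> A xs y = A ys y) \<and>
     (\<forall>xs p y. p permutes {..<n} \<longrightarrow> A (xs \<circ> p) y = A xs y)"

definition sym_multilin_form :: "nat \<Rightarrow> ((nat \<Rightarrow> 'a::real_vector) \<Rightarrow> real) \<Rightarrow> bool" where
  "sym_multilin_form p P \<longleftrightarrow>
     (\<forall>xs. \<forall>i<p. linear (\<lambda>t. P (xs(i := t)))) \<and>
     (\<forall>xs ys. (\<forall>i<p. xs i = ys i) \<longrightarrow> P xs = P ys) \<and>
     (\<forall>xs q. q permutes {..<p} \<longrightarrow> P (xs \<circ> q) = P xs)"

definition linear_lie_rack :: "('a::real_normed_vector \<Rightarrow> 'a \<Rightarrow> 'a) \<Rightarrow> bool" where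
  "linear_lie_rack rk \<longleftrightarrow>
     smooth_map (\<lambda>(x, y). rk x y) \<and>
     (\<forall>x. linear (rk x) \<and> bij (rk x)) \<and>
     (\<forall>x y z. rk x (rk y z) = rk (rk x y) (rk x z)) \<and>
     (\<forall>x. rk x 0 = 0) \<and>
     rk 0 = id"

definition analytic_linear_lie_rack :: "('a::real_normed_vector \<Rightarrow> 'a \<Rightarrow> 'a) \<Rightarrow> bool" where
  "analytic_linear_lie_rack rk \<longleftrightarrow> linear_lie_rack rk \<and>
     (\<exists>A :: nat \<Rightarrow> (nat \<Rightarrow> 'a) \<Rightarrow> 'a \<Rightarrow> 'a.
        (\<forall>n\<ge>1. sym_multilin_map n (A n)) \<and>
        (\<forall>x y. (\<lambda>n. A (Suc n) (\<lambda>_. x) y) sums (rk x y - y)))"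

definition rack_bracket_is :: "('a::real_normed_vector \<Rightarrow> 'a \<Rightarrow> 'a) \<Rightarrow> ('a \<Rightarrow> 'a \<Rightarrow> 'a) \<Rightarrow> bool" where
  "rack_bracket_is rk br \<longleftrightarrow>
     (\<forall>u v. ((\<lambda>t. rk (t *\<^sub>R u) v) has_vector_derivative br u v) (at 0))"

definition lin_exp :: "('a::real_normed_vector \<Rightarrow> 'a) \<Rightarrow> 'a \<Rightarrow> 'a" where
  "lin_exp A y = (\<Sum>n. (1 / fact n) *\<^sub>R (A ^^ n) y)"

definition killing_half :: "(real^'n \<Rightarrow> real^'n \<Rightarrow> real^'n) \<Rightarrow> real^'n \<Rightarrow> real" where
  "killing_half br x = (1/2) * (\<Sum>i\<in>UNIV. (br x (br x (axis i 1))) $ i)"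

definition rigid :: "('a::real_normed_vector \<Rightarrow> 'a \<Rightarrow> 'a) \<Rightarrow> bool" where
  "rigid br \<longleftrightarrow> (\<forall>rk. analytic_linear_lie_rack rk \<and> rack_bracket_is rk br \<longrightarrow>
     (\<exists>F p P. real_analytic F \<and> F 0 = 1 \<and> sym_multilin_form p P \<and>
        (\<forall>y xs. (\<Sum>i<p. P (xs(i := br y (xs i)))) = 0) \<and>
        (\<forall>x y. rk x y = lin_exp (\<lambda>z. F (P (\<lambda>_. x)) *\<^sub>R br x z) y)))"

end

theory Submission
  imports Defs "HOL-Complex_Analysis.Complex_Analysis"
begin

text \<open>
  Differentiating self-distributivity shows that every \<open>L\<^sub>x\<close> is a Lie algebra automorphism and that
  the rack is equivariant under the one-parameter groups \<open>exp (s ad\<^sub>u)\<close>. So each homogeneous part of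
  the rack series is an equivariant polynomial map, and for \<open>so(3)\<close> and \<open>sl(2)\<close> such a map of
  degree \<open>n\<close> is \<open>c\<^sub>n k(x)\<^sup>m ad\<^sub>x\<close> or \<open>c\<^sub>n k(x)\<^sup>m ad\<^sub>x\<^sup>2\<close>, where \<open>k(x) = \<langle>x,x\<rangle>\<close> and
  \<open>ad\<^sub>x\<^sup>3 = k(x) ad\<^sub>x\<close>. Hence \<open>L\<^sub>x = 1 + \<beta>(k x) ad\<^sub>x + \<gamma>(k x) ad\<^sub>x\<^sup>2\<close> with entire \<open>\<beta>, \<gamma>\<close>,
  and since \<open>L\<^sub>x\<close> is an automorphism, \<open>2\<gamma>(u) + u \<gamma>(u)\<^sup>2 = \<beta>(u)\<^sup>2\<close>. Then
  \<open>e(z) = 1 + z \<beta>(z\<^sup>2) + z\<^sup>2 \<gamma>(z\<^sup>2)\<close> satisfies \<open>e(z) e(-z) = 1\<close>, so it has an odd logarithm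
  \<open>\<theta>(z) = z F(z\<^sup>2)\<close>; comparing \<open>sinh \<theta>\<close> and \<open>cosh \<theta> - 1\<close> with \<open>\<beta>\<close> and \<open>\<gamma>\<close> gives
  \<open>L\<^sub>x = exp (F(k x) ad\<^sub>x)\<close>, with \<open>F\<close> real analytic. Rigidity follows with the Killing form as \<open>P\<close>.
\<close>

no_notation fps_nth (infixl \<open>$\<close> 75)

section \<open>Power series\<close>

lemma powser_zero_imp_coeffs_zero:
  fixes c :: "nat \<Rightarrow> real"
  assumes zero: "\<And>t. (\<lambda>n. c n * t^n) sums 0"
  shows "c n = 0"
proof (induction n rule: less_induct)
  case (less n)
  have tail: "(\<lambda>m. c (m + n) * t^m) sums 0" if "t \<noteq> 0" for t
  proof -
    have "(\<lambda>m. c (m + n) * t^(m + n)) sums 0"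
      using zero[of t] less by (subst sums_iff_shift) simp
    then have "(\<lambda>m. inverse (t^n) * (c (m + n) * t^(m + n))) sums (inverse (t^n) * 0)"
      by (rule sums_mult)
    then show ?thesis using that by (simp add: power_add field_simps)
  qed
  define h where "h t = (\<Sum>m. c (m + n) * t^m)" for t :: real
  have "summable (\<lambda>m. c (m + n) * 1^m)" using tail[of 1] by (auto simp: sums_iff)
  then have "isCont h 0" unfolding h_def by (rule isCont_powser) simp
  then have "h \<midarrow>0\<rightarrow> h 0" by (simp add: isCont_def)
  moreover have "\<forall>\<^sub>F t in at 0. h t = 0"
    unfolding eventually_at_filter
    by (rule always_eventually) (auto simp: h_def intro!: sums_unique[symmetric] tail)
  then have "h \<midarrow>0\<rightarrow> 0" by (simp add: tendsto_eventually)
  moreover have "h 0 = c n" by (simp add: h_def)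
  ultimately show ?case using LIM_unique by metis
qed

lemma powser_coeffs_unique_vec:
  fixes a b :: "nat \<Rightarrow> real^'n"
  assumes a: "\<And>t. (\<lambda>n. t^n *\<^sub>R a n) sums f t" and b: "\<And>t. (\<lambda>n. t^n *\<^sub>R b n) sums f t"
  shows "a = b"
proof -
  have "a n $ j - b n $ j = 0" for n j
  proof (rule powser_zero_imp_coeffs_zero)
    fix t :: real
    have "(\<lambda>n. (t^n *\<^sub>R a n) $ j - (t^n *\<^sub>R b n) $ j) sums (f t $ j - f t $ j)"
      by (intro sums_diff sums_vec_nth a b)
    then show "(\<lambda>n. (a n $ j - b n $ j) * t^n) sums 0" by (simp add: algebra_simps)
  qed
  then show ?thesis by (auto simp: vec_eq_iff)
qed

lemma sums_even_terms_iff: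
  fixes a :: "nat \<Rightarrow> 'a::real_normed_vector"
  shows "(\<lambda>m. a (2*m)) sums S \<longleftrightarrow> (\<lambda>n. if even n then a n else 0) sums S"
proof -
  have "strict_mono (\<lambda>m::nat. 2*m)" by (auto simp: strict_mono_def)
  moreover have "n \<notin> range (\<lambda>m::nat. 2*m) \<Longrightarrow> (if even n then a n else 0) = 0" for n
    by (auto elim!: evenE)
  ultimately show ?thesis
    using sums_mono_reindex[of "\<lambda>m. 2*m" "\<lambda>n. if even n then a n else 0" S] by simp
qed

lemma sums_odd_terms_iff:
  fixes a :: "nat \<Rightarrow> 'a::real_normed_vector"
  shows "(\<lambda>m. a (2*m+1)) sums S \<longleftrightarrow> (\<lambda>n. if odd n then a n else 0) sums S"
proof -
  have "strict_mono (\<lambda>m::nat. 2*m+1)" by (auto simp: strict_mono_def)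
  moreover have "n \<notin> range (\<lambda>m::nat. 2*m+1) \<Longrightarrow> (if odd n then a n else 0) = 0" for n
    by (auto elim!: oddE)
  ultimately show ?thesis
    using sums_mono_reindex[of "\<lambda>m. 2*m+1" "\<lambda>n. if odd n then a n else 0" S] by simp
qed

lemma sums_even_odd_terms:
  fixes a :: "nat \<Rightarrow> 'a::real_normed_vector"
  assumes a: "a sums S" and alt: "(\<lambda>n. (-1::real)^n *\<^sub>R a n) sums S'"
  shows "(\<lambda>m. a (2*m)) sums ((1/2) *\<^sub>R (S + S'))"
    and "(\<lambda>m. a (2*m+1)) sums ((1/2) *\<^sub>R (S - S'))"
proof -
  have "(\<lambda>n. (1/2::real) *\<^sub>R (a n + (-1::real)^n *\<^sub>R a n)) sums ((1/2) *\<^sub>R (S + S'))"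
    by (intro sums_scaleR_right sums_add a alt)
  moreover have "(\<lambda>n. (1/2::real) *\<^sub>R (a n + (-1::real)^n *\<^sub>R a n)) = (\<lambda>n. if even n then a n else 0)"
    by (rule ext) simp
  ultimately show "(\<lambda>m. a (2*m)) sums ((1/2) *\<^sub>R (S + S'))"
    unfolding sums_even_terms_iff by simp
  have "(\<lambda>n. (1/2::real) *\<^sub>R (a n - (-1::real)^n *\<^sub>R a n)) sums ((1/2) *\<^sub>R (S - S'))"
    by (intro sums_scaleR_right sums_diff a alt)
  moreover have "(\<lambda>n. (1/2::real) *\<^sub>R (a n - (-1::real)^n *\<^sub>R a n)) = (\<lambda>n. if odd n then a n else 0)"
    by (rule ext) (simp add: scaleR_2[symmetric] del: scaleR_half_double)
  ultimately show "(\<lambda>m. a (2*m+1)) sums ((1/2) *\<^sub>R (S - S'))"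
    unfolding sums_odd_terms_iff by simp
qed

lemma sums_from_even_odd_terms:
  fixes a :: "nat \<Rightarrow> 'a::real_normed_vector"
  assumes "(\<lambda>m. a (2*m)) sums S" and "(\<lambda>m. a (2*m+1)) sums S'"
  shows "a sums (S + S')"
proof -
  have "(\<lambda>n. (if even n then a n else 0) + (if odd n then a n else 0)) sums (S + S')"
    using assms[unfolded sums_even_terms_iff sums_odd_terms_iff] by (rule sums_add)
  moreover have "(\<lambda>n. (if even n then a n else 0) + (if odd n then a n else 0)) = a" by auto
  ultimately show ?thesis by simp
qed

lemma real_polynomial_function_ident: "real_polynomial_function (\<lambda>s::real. s)"
  by (rule real_polynomial_function.intros(1)[OF bounded_linear_ident])

lemma real_polynomial_function_eq_0_if_eq_0_on_ray:
  fixes f :: "real \<Rightarrow> real"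
  assumes "real_polynomial_function f" and "\<And>s. s > S \<Longrightarrow> f s = 0"
  shows "f x = 0"
proof -
  obtain a n where f: "f = (\<lambda>x. \<Sum>i\<le>n. a i * x^i)"
    using real_polynomial_function_imp_sum[OF assms(1)] by blast
  have "{S<..} \<subseteq> {x. (\<Sum>i\<le>n. a i * x^i) = 0}" using assms(2) f by auto
  then have "\<not> finite {x. (\<Sum>i\<le>n. a i * x^i) = 0}" using infinite_Ioi finite_subset by blast
  then show ?thesis using f by (simp add: polyfun_finite_roots)
qed

definition real_powser :: "(nat \<Rightarrow> real) \<Rightarrow> 'a::{real_normed_field,banach} \<Rightarrow> 'a" where
  "real_powser a w = (\<Sum>n. of_real (a n) * w^n)"

definition entire_coeffs :: "(nat \<Rightarrow> real) \<Rightarrow> bool" where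
  "entire_coeffs a \<longleftrightarrow> (\<forall>s::real. summable (\<lambda>n. a n * s^n))"

lemma summable_real_powser:
  assumes "entire_coeffs a"
  shows "summable (\<lambda>n. of_real (a n) * (w::'a::{real_normed_field,banach})^n)"
proof -
  have "summable (\<lambda>n. a n * (norm w + 1)^n)" using assms unfolding entire_coeffs_def by blast
  then have "summable (\<lambda>n. norm (a n * (norm w)^n))"
    by (rule powser_insidea) simp
  then have "summable (\<lambda>n. norm (of_real (a n) * w^n :: 'a))"
    by (simp add: norm_mult norm_power abs_mult)
  then show ?thesis by (rule summable_norm_cancel)
qed

lemma real_powser_sums: "entire_coeffs a \<Longrightarrow> (\<lambda>n. of_real (a n) * w^n) sums real_powser a w"
  unfolding real_powser_def using summable_real_powser by (blast intro: summable_sums)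

lemma real_powser_sums_real: "entire_coeffs a \<Longrightarrow> (\<lambda>n. a n * s^n) sums real_powser a (s::real)"
  using real_powser_sums[of a s] by simp

lemma real_powser_of_real:
  assumes "entire_coeffs a"
  shows "real_powser a (of_real s :: 'a::{real_normed_field,banach}) = of_real (real_powser a s)"
proof -
  have "(\<lambda>n. of_real (a n * s^n) :: 'a) sums of_real (real_powser a s)"
    using sums_of_real[OF real_powser_sums[OF assms, of s]] by simp
  then have "(\<lambda>n. of_real (a n) * (of_real s)^n :: 'a) sums of_real (real_powser a s)"
    by simp
  then show ?thesis using real_powser_sums[OF assms, of "of_real s"] sums_unique2 by blast
qed

lemma real_powser_0 [simp]: "real_powser a 0 = of_real (a 0)"
  unfolding real_powser_def by simp

lemma real_powser_cnj:
  assumes "entire_coeffs a"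
  shows "real_powser a (cnj w) = cnj (real_powser a (w::complex))"
proof -
  have "(\<lambda>n. cnj (complex_of_real (a n) * w^n)) sums cnj (real_powser a w)"
    by (rule sums_cnj[THEN iffD2, OF real_powser_sums[OF assms]])
  then have "(\<lambda>n. complex_of_real (a n) * (cnj w)^n) sums cnj (real_powser a w)"
    by simp
  then show ?thesis using real_powser_sums[OF assms, of "cnj w"] sums_unique2 by blast
qed

lemma holomorphic_on_UNIV_powser:
  fixes c :: "nat \<Rightarrow> complex"
  assumes "\<And>w. summable (\<lambda>n. c n * w^n)"
  shows "(\<lambda>w. \<Sum>n. c n * w^n) holomorphic_on UNIV"
proof -
  have "((\<lambda>w. \<Sum>n. c n * w^n) has_field_derivative (\<Sum>n. diffs c n * w^n)) (at w)" for w
    by (rule termdiffs_strong[OF assms[of "of_real (norm w + 1)"]]) simp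
  then show ?thesis
    unfolding holomorphic_on_def field_differentiable_def using has_field_derivative_at_within by blast
qed

lemma holomorphic_real_powser:
  "entire_coeffs a \<Longrightarrow> (real_powser a :: complex \<Rightarrow> complex) holomorphic_on UNIV"
  unfolding real_powser_def[abs_def] by (intro holomorphic_on_UNIV_powser summable_real_powser)

lemma isCont_real_powser: "entire_coeffs a \<Longrightarrow> isCont (real_powser a :: complex \<Rightarrow> complex) w"
  using holomorphic_on_imp_continuous_on[OF holomorphic_real_powser]
  by (simp add: continuous_on_eq_continuous_at)

lemma entire_coeffs_if_bounded_by_inverse_fact:
  assumes "\<And>m. \<bar>c m\<bar> \<le> 1 / fact m"
  shows "entire_coeffs c"
  unfolding entire_coeffs_def
proof
  fix s :: real
  have "summable (\<lambda>m. \<bar>s\<bar>^m /\<^sub>R fact m)" using exp_converges[of "\<bar>s\<bar>"] by (simp add: sums_iff)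
  moreover have "norm (c m * s^m) \<le> \<bar>s\<bar>^m /\<^sub>R fact m" for m
  proof -
    have "\<bar>c m\<bar> * \<bar>s\<bar>^m \<le> (1 / fact m) * \<bar>s\<bar>^m"
      by (rule mult_right_mono[OF assms]) simp
    then show ?thesis by (simp add: abs_mult power_abs field_simps)
  qed
  ultimately show "summable (\<lambda>m. c m * s^m)"
    using summable_comparison_test[of "\<lambda>m. c m * s^m" "\<lambda>m. \<bar>s\<bar>^m /\<^sub>R fact m"] by blast
qed

text \<open>The coefficients of \<open>sinh \<surd>u / \<surd>u\<close> and \<open>(cosh \<surd>u - 1) / u\<close>.\<close>

definition sinhc_coeffs :: "nat \<Rightarrow> real" where "sinhc_coeffs m = 1 / fact (2*m+1)"
definition coshc_coeffs :: "nat \<Rightarrow> real" where "coshc_coeffs m = 1 / fact (2*m+2)"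

lemma inverse_fact_antimono: "m \<le> k \<Longrightarrow> \<bar>1 / (fact k :: real)\<bar> \<le> 1 / fact m"
  by (simp add: divide_left_mono fact_mono)

lemma entire_sinhc_coeffs: "entire_coeffs sinhc_coeffs"
  by (rule entire_coeffs_if_bounded_by_inverse_fact)
    (unfold sinhc_coeffs_def, rule inverse_fact_antimono, simp)

lemma entire_coshc_coeffs: "entire_coeffs coshc_coeffs"
  by (rule entire_coeffs_if_bounded_by_inverse_fact)
    (unfold coshc_coeffs_def, rule inverse_fact_antimono, simp)

lemma sinh_eq_real_powser_sinhc: "sinh t = t * real_powser sinhc_coeffs ((t::complex)^2)"
proof -
  have "(\<lambda>n. if odd n then t ^ n /\<^sub>R fact n else 0) = (\<lambda>n. if even n then 0 else t ^ n /\<^sub>R fact n)"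
    by (rule ext) simp
  then have "(\<lambda>n. if odd n then t ^ n /\<^sub>R fact n else 0) sums sinh t"
    using sinh_converges[of t] by simp
  then have "(\<lambda>m. t^(2*m+1) /\<^sub>R fact (2*m+1)) sums sinh t"
    by (rule sums_odd_terms_iff[THEN iffD2])
  moreover have "t^(2*m+1) /\<^sub>R fact (2*m+1) = t * (of_real (sinhc_coeffs m) * (t^2)^m)" for m
  proof -
    have t: "t^(2*m+1) = t * (t^2)^m" by (simp add: power_mult[symmetric] power_add mult.commute)
    show ?thesis
      unfolding t sinhc_coeffs_def by (simp add: scaleR_conv_of_real divide_inverse mult_ac)
  qed
  ultimately have "(\<lambda>m. t * (of_real (sinhc_coeffs m) * (t^2)^m)) sums sinh t" by simp
  moreover have "(\<lambda>m. t * (of_real (sinhc_coeffs m) * (t^2)^m)) sums (t * real_powser sinhc_coeffs (t^2))"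
    by (intro sums_mult real_powser_sums entire_sinhc_coeffs)
  ultimately show ?thesis using sums_unique2 by blast
qed

lemma cosh_minus_1_eq_real_powser_coshc:
  "cosh t - 1 = t^2 * real_powser coshc_coeffs ((t::complex)^2)"
proof -
  have "(\<lambda>m. t^(2*m) /\<^sub>R fact (2*m)) sums cosh t"
    by (rule sums_even_terms_iff[THEN iffD2]) (rule cosh_converges)
  then have "(\<lambda>m. t^(2 * Suc m) /\<^sub>R fact (2 * Suc m)) sums (cosh t - 1)"
    by (subst sums_Suc_iff) simp
  moreover have "t^(2 * Suc m) /\<^sub>R fact (2 * Suc m) = t^2 * (of_real (coshc_coeffs m) * (t^2)^m)" for m
  proof -
    have "t^(2 * Suc m) = t^2 * (t^2)^m"
      by (simp only: power_mult[symmetric] mult_Suc_right power_add)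
    moreover have "2 * Suc m = 2*m+2" by simp
    ultimately show ?thesis
      by (simp add: coshc_coeffs_def scaleR_conv_of_real divide_inverse mult_ac del: mult_Suc_right)
  qed
  ultimately have "(\<lambda>m. t^2 * (of_real (coshc_coeffs m) * (t^2)^m)) sums (cosh t - 1)" by simp
  moreover have "(\<lambda>m. t^2 * (of_real (coshc_coeffs m) * (t^2)^m)) sums (t^2 * real_powser coshc_coeffs (t^2))"
    by (intro sums_mult real_powser_sums entire_coshc_coeffs)
  ultimately show ?thesis using sums_unique2 by blast
qed

section \<open>The analytic reparametrization\<close>

lemma continuous_exp_eq_1_imp_0:
  fixes f :: "complex \<Rightarrow> complex"
  assumes cont: "continuous_on UNIV f" and f0: "f 0 = 0" and exp: "\<And>z. exp (f z) = 1"
  shows "f z = 0"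
proof -
  have "f constant_on UNIV"
  proof (rule continuous_discrete_range_constant[OF connected_UNIV cont])
    fix x :: complex
    show "\<exists>e>0. \<forall>y. y \<in> UNIV \<and> f y \<noteq> f x \<longrightarrow> e \<le> norm (f y - f x)"
    proof (intro exI[of _ "2*pi"] conjI allI impI)
      fix y assume y: "y \<in> UNIV \<and> f y \<noteq> f x"
      have "exp (f y - f x) = 1" using exp[of y] exp[of x] by (simp add: exp_diff)
      then obtain n :: int where re: "Re (f y - f x) = 0" and im: "Im (f y - f x) = of_int (2*n) * pi"
        unfolding exp_eq_1 by blast
      have "n \<noteq> 0" using re im y by (auto simp: complex_eq_iff)
      then have "2*pi \<le> \<bar>Im (f y - f x)\<bar>" using im pi_gt_zero by (simp add: abs_mult)
      also have "\<dots> \<le> norm (f y - f x)" by (rule abs_Im_le_cmod)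
      finally show "2*pi \<le> norm (f y - f x)" .
    qed simp
  qed
  then show ?thesis using f0 unfolding constant_on_def by (metis UNIV_I)
qed

lemma isCont_eq_0_if_eq_0_off_0:
  fixes f :: "'a::{real_normed_vector,perfect_space} \<Rightarrow> 'b::real_normed_vector"
  assumes "isCont f 0" and "\<And>w. w \<noteq> 0 \<Longrightarrow> f w = 0"
  shows "f 0 = 0"
proof -
  have "f \<midarrow>0\<rightarrow> f 0" using assms(1) by (simp add: isCont_def)
  moreover have "\<forall>\<^sub>F w in at 0. f w = 0"
    unfolding eventually_at_filter by (rule always_eventually) (simp add: assms(2))
  then have "f \<midarrow>0\<rightarrow> 0" by (rule tendsto_eventually)
  ultimately show ?thesis by (rule LIM_unique)
qed

lemma holomorphic_eq_0_if_eq_0_on_ray: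
  fixes h :: "complex \<Rightarrow> complex"
  assumes hol: "h holomorphic_on UNIV" and \<sigma>: "\<sigma> \<noteq> 0"
    and ray: "\<And>s. s > 0 \<Longrightarrow> h (of_real (\<sigma> * s)) = 0"
  shows "h w = 0"
proof -
  define U where "U = (\<lambda>s. complex_of_real (\<sigma> * s)) ` {0<..}"
  have "complex_of_real \<sigma> islimpt U"
    unfolding islimpt_approachable
  proof (intro allI impI)
    fix e :: real assume e: "e > 0"
    define s where "s = 1 + e / (2 * \<bar>\<sigma>\<bar>)"
    have "dist (complex_of_real (\<sigma> * s)) (complex_of_real \<sigma>) = \<bar>\<sigma> * s - \<sigma>\<bar>"
      by (metis dist_norm norm_of_real of_real_diff)
    also have "\<dots> = e / 2" using \<sigma> e by (simp add: s_def algebra_simps abs_mult)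
    finally have "dist (complex_of_real (\<sigma> * s)) (complex_of_real \<sigma>) = e / 2" .
    moreover have "complex_of_real (\<sigma> * s) \<in> U"
      unfolding U_def using e by (intro imageI) (simp add: s_def add_pos_nonneg)
    ultimately show "\<exists>x'\<in>U. x' \<noteq> complex_of_real \<sigma> \<and> dist x' (complex_of_real \<sigma>) < e"
      using e by (intro bexI[of _ "complex_of_real (\<sigma> * s)"]) auto
  qed
  moreover have "h z = 0" if "z \<in> U" for z using that ray by (auto simp: U_def)
  ultimately show ?thesis
    using analytic_continuation[OF hol open_UNIV connected_UNIV subset_UNIV UNIV_I] by blast
qed

lemma entire_odd_log:
  fixes e :: "complex \<Rightarrow> complex"
  assumes hol: "e holomorphic_on UNIV" and recip: "\<And>z. e z * e (-z) = 1" and e0: "e 0 = 1"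
    and cnj: "\<And>z. e (cnj z) = cnj (e z)"
  obtains \<theta> where "\<theta> holomorphic_on UNIV" "\<And>z. exp (\<theta> z) = e z"
    "\<And>z. \<theta> (-z) = - \<theta> z" "\<And>z. \<theta> (cnj z) = cnj (\<theta> z)"
proof -
  have nz: "e z \<noteq> 0" for z using recip[of z] by auto
  obtain g where g: "g holomorphic_on UNIV" "\<And>z. z \<in> UNIV \<Longrightarrow> e z = exp (g z)"
    by (rule contractible_imp_holomorphic_log[OF hol convex_imp_contractible[OF convex_UNIV] nz]) iprover
  define \<theta> where "\<theta> z = g z - g 0" for z
  have exp\<theta>: "exp (\<theta> z) = e z" for z
    using g(2)[of z] g(2)[of 0] e0 by (simp add: \<theta>_def exp_diff)
  have hol\<theta>: "\<theta> holomorphic_on UNIV" unfolding \<theta>_def[abs_def] by (intro holomorphic_intros g(1))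
  then have cont\<theta>: "continuous_on UNIV \<theta>" by (rule holomorphic_on_imp_continuous_on)
  have \<theta>0: "\<theta> 0 = 0" by (simp add: \<theta>_def)
  text \<open>Both symmetries hold up to a continuous multiple of \<open>2\<pi>i\<close>, which vanishes at \<open>0\<close>.\<close>
  have "continuous_on UNIV (\<lambda>z. \<theta> (-z))"
    by (rule continuous_on_compose2[OF cont\<theta>]) (auto intro: continuous_intros)
  have "\<theta> z + \<theta> (-z) = 0" for z
  proof (rule continuous_exp_eq_1_imp_0[of "\<lambda>z. \<theta> z + \<theta> (-z)"])
    show "continuous_on UNIV (\<lambda>z. \<theta> z + \<theta> (- z))"
      using cont\<theta> \<open>continuous_on UNIV (\<lambda>z. \<theta> (-z))\<close> by (rule continuous_on_add)
    show "exp (\<theta> z + \<theta> (- z)) = 1" for z using recip[of z] by (simp add: exp_add exp\<theta>)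
  qed (simp add: \<theta>0)
  then have odd: "\<theta> (-z) = - \<theta> z" for z by (simp add: eq_neg_iff_add_eq_0 add.commute)
  have "cnj (\<theta> (cnj z)) - \<theta> z = 0" for z
  proof (rule continuous_exp_eq_1_imp_0[of "\<lambda>z. cnj (\<theta> (cnj z)) - \<theta> z"])
    have "continuous_on UNIV (\<lambda>z. cnj (\<theta> (cnj z)))"
      by (intro continuous_intros continuous_on_compose2[OF cont\<theta>]) auto
    then show "continuous_on UNIV (\<lambda>z. cnj (\<theta> (cnj z)) - \<theta> z)"
      using cont\<theta> by (rule continuous_on_diff)
    show "exp (cnj (\<theta> (cnj z)) - \<theta> z) = 1" for z
    proof -
      have "exp (cnj (\<theta> (cnj z))) = e z" using exp\<theta>[of "cnj z"] cnj[of "cnj z"]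
        by (metis complex_cnj_cnj exp_cnj)
      then show ?thesis using nz[of z] by (simp add: exp_diff exp\<theta>)
    qed
  qed (simp add: \<theta>0)
  then have "\<theta> (cnj z) = cnj (\<theta> z)" for z by (metis complex_cnj_cnj eq_iff_diff_eq_0)
  then show ?thesis by (rule that[OF hol\<theta> exp\<theta> odd])
qed

lemma entire_odd_eq_mult_square:
  fixes \<theta> :: "complex \<Rightarrow> complex"
  assumes hol: "\<theta> holomorphic_on UNIV" and odd: "\<And>z. \<theta> (-z) = - \<theta> z"
  obtains G where "G holomorphic_on UNIV" "\<And>z. \<theta> z = z * G (z^2)"
proof -
  define a where "a n = (deriv ^^ n) \<theta> 0 / fact n" for n
  have \<theta>_sums: "(\<lambda>n. a n * z^n) sums \<theta> z" for z
    using holomorphic_power_series[OF holomorphic_on_subset[OF hol], of 0 "norm z + 1" z]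
    by (simp add: a_def)
  have odd_sums: "(\<lambda>m. a (2*m+1) * z^(2*m+1)) sums \<theta> z" for z
  proof -
    have "(\<lambda>n. (-1::real)^n *\<^sub>R (a n * z^n)) sums \<theta> (-z)"
      using \<theta>_sums[of "-z"] by (simp add: power_minus[of z] scaleR_conv_of_real mult.left_commute)
    from sums_even_odd_terms(2)[OF \<theta>_sums this] show ?thesis
      by (simp add: odd scaleR_conv_of_real)
  qed
  have G_sums: "(\<lambda>m. a (2*m+1) * (z^2)^m) sums (\<theta> z / z)" if "z \<noteq> 0" for z
  proof -
    have eq: "inverse z * (a (2*m+1) * z^(2*m+1)) = a (2*m+1) * (z^2)^m" for m
    proof -
      have "z^(2*m+1) = z * (z^2)^m" by (simp add: power_mult[symmetric] power_add mult.commute)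
      then show ?thesis using that by (simp add: field_simps)
    qed
    show ?thesis
      using sums_mult[OF odd_sums[of z], of "inverse z"] unfolding eq
      by (simp add: divide_inverse mult.commute)
  qed
  define G where "G w = (\<Sum>m. a (2*m+1) * w^m)" for w
  have summable: "summable (\<lambda>m. a (2*m+1) * w^m)" for w
  proof (cases "w = 0")
    case False
    then have "csqrt w \<noteq> 0" by simp
    from G_sums[OF this] show ?thesis by (simp add: sums_iff)
  qed (simp add: summable_0_powser)
  have "G holomorphic_on UNIV"
    unfolding G_def[abs_def] using summable by (rule holomorphic_on_UNIV_powser)
  moreover have "\<theta> z = z * G (z^2)" for z
  proof (cases "z = 0")
    case True then show ?thesis using odd[of 0] by simp
  next
    case False
    then show ?thesis using G_sums[OF False] by (simp add: G_def sums_iff)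
  qed
  ultimately show ?thesis using that by blast
qed

lemma square_factor_cnj:
  fixes \<theta> G :: "complex \<Rightarrow> complex"
  assumes hol: "G holomorphic_on UNIV" and factor: "\<And>z. \<theta> z = z * G (z^2)"
    and cnj: "\<And>z. \<theta> (cnj z) = cnj (\<theta> z)"
  shows "G (cnj w) = cnj (G w)"
proof -
  have off_0: "G (cnj w) - cnj (G w) = 0" if "w \<noteq> 0" for w
  proof -
    define z where "z = csqrt w"
    have "cnj z \<noteq> 0" "z^2 = w" using that by (simp_all add: z_def)
    then have "(cnj z)^2 = cnj w" by (metis complex_cnj_power)
    then have "cnj z * G (cnj w) = cnj z * cnj (G w)"
      using cnj[of z] factor[of z] factor[of "cnj z"] \<open>z^2 = w\<close> by simp
    then show ?thesis using \<open>cnj z \<noteq> 0\<close> by simp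
  qed
  have "isCont G w" for w
    using holomorphic_on_imp_continuous_on[OF hol] by (simp add: continuous_on_eq_continuous_at)
  then have "isCont (\<lambda>w. G (cnj w) - cnj (G w)) 0"
    by (intro continuous_intros isCont_o2[where f = cnj])
  from isCont_eq_0_if_eq_0_off_0[OF this off_0] off_0[of w] show ?thesis
    by (cases "w = 0") auto
qed

lemma real_analytic_Re_of_real_holomorphic:
  fixes G :: "complex \<Rightarrow> complex"
  assumes hol: "G holomorphic_on UNIV"
  shows "real_analytic (\<lambda>s. Re (G (of_real s)))"
  unfolding real_analytic_def
proof
  fix x0 :: real
  define c where "c k = Re ((deriv ^^ k) G (of_real x0) / fact k)" for k
  have "(\<lambda>k. c k * (x - x0) ^ k) sums Re (G (of_real x))" if "\<bar>x - x0\<bar> < 1" for x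
  proof -
    have xb: "complex_of_real x \<in> ball (of_real x0) 1"
      using that by (simp add: dist_norm abs_minus_commute flip: of_real_diff)
    have "Re ((deriv ^^ k) G (of_real x0) / fact k * (of_real x - of_real x0)^k) = c k * (x - x0) ^ k"
      for k
    proof -
      have "Re (w * complex_of_real r) = Re w * r" for w r by simp
      then show ?thesis by (simp only: c_def of_real_diff[symmetric] of_real_power[symmetric])
    qed
    with sums_Re[OF holomorphic_power_series[OF holomorphic_on_subset[OF hol] xb]]
    show ?thesis by simp
  qed
  then show "\<exists>r>0. \<exists>c. \<forall>x. \<bar>x - x0\<bar> < r \<longrightarrow> (\<lambda>k. c k * (x - x0) ^ k) sums Re (G (of_real x))"
    by (intro exI[of _ "1::real"] conjI exI[of _ c]) auto
qed

lemma sinhc_coshc_identities_of_odd_log: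
  fixes b c G \<theta> :: "complex \<Rightarrow> complex"
  assumes exp: "\<And>z. exp (\<theta> z) = 1 + z * b (z^2) + z^2 * c (z^2)"
    and odd: "\<And>z. \<theta> (-z) = - \<theta> z" and factor: "\<And>z. \<theta> z = z * G (z^2)"
    and cont: "isCont G 0" "isCont b 0" "isCont c 0"
  shows "G w * real_powser sinhc_coeffs ((G w)^2 * w) = b w"
    and "(G w)^2 * real_powser coshc_coeffs ((G w)^2 * w) = c w"
proof -
  have off_0: "G w * real_powser sinhc_coeffs ((G w)^2 * w) = b w \<and>
      (G w)^2 * real_powser coshc_coeffs ((G w)^2 * w) = c w" if "w \<noteq> 0" for w
  proof -
    define z where "z = csqrt w"
    have z0: "z \<noteq> 0" and zw: "z^2 = w" using that by (simp_all add: z_def)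
    have exp_pos: "exp (\<theta> z) = 1 + z * b w + w * c w" using exp[of z] zw by simp
    have exp_neg: "exp (- \<theta> z) = 1 - z * b w + w * c w" using exp[of "-z"] zw odd[of z] by simp
    have \<theta>z: "\<theta> z = z * G w" using factor[of z] zw by simp
    have "z * (G w * real_powser sinhc_coeffs ((G w)^2 * w)) = sinh (\<theta> z)"
      unfolding sinh_eq_real_powser_sinhc \<theta>z by (simp add: power_mult_distrib zw mult_ac)
    also have "\<dots> = z * b w"
      unfolding sinh_def exp_pos exp_neg by (simp add: scaleR_conv_of_real field_simps)
    finally have sinhc: "G w * real_powser sinhc_coeffs ((G w)^2 * w) = b w" using z0 by simp
    have "w * ((G w)^2 * real_powser coshc_coeffs ((G w)^2 * w)) = cosh (\<theta> z) - 1"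
      unfolding cosh_minus_1_eq_real_powser_coshc \<theta>z by (simp add: power_mult_distrib zw mult_ac)
    also have "\<dots> = w * c w"
      unfolding cosh_def exp_pos exp_neg by (simp add: scaleR_conv_of_real field_simps)
    finally have "(G w)^2 * real_powser coshc_coeffs ((G w)^2 * w) = c w" using that by simp
    with sinhc show ?thesis ..
  qed
  have "isCont (\<lambda>w. G w * real_powser sinhc_coeffs ((G w)^2 * w) - b w) 0"
    by (intro continuous_intros cont isCont_o2[OF _ isCont_real_powser[OF entire_sinhc_coeffs]])
  from isCont_eq_0_if_eq_0_off_0[OF this] off_0 off_0[of w]
  show "G w * real_powser sinhc_coeffs ((G w)^2 * w) = b w"
    by (cases "w = 0") auto
  have "isCont (\<lambda>w. (G w)^2 * real_powser coshc_coeffs ((G w)^2 * w) - c w) 0"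
    by (intro continuous_intros cont isCont_o2[OF _ isCont_real_powser[OF entire_coshc_coeffs]])
  from isCont_eq_0_if_eq_0_off_0[OF this] off_0 off_0[of w]
  show "(G w)^2 * real_powser coshc_coeffs ((G w)^2 * w) = c w"
    by (cases "w = 0") auto
qed

lemma odd_log_of_powser_relation:
  fixes \<beta> \<gamma> :: "nat \<Rightarrow> real"
  assumes eb: "entire_coeffs \<beta>" and ec: "entire_coeffs \<gamma>"
    and rel: "\<And>w::complex. 2 * real_powser \<gamma> w + w * (real_powser \<gamma> w)^2 = (real_powser \<beta> w)^2"
  obtains \<theta> where "\<theta> holomorphic_on UNIV"
    "\<And>z. exp (\<theta> z) = 1 + z * real_powser \<beta> (z^2) + z^2 * real_powser \<gamma> (z^2)"
    "\<And>z. \<theta> (-z) = - \<theta> z" "\<And>z. \<theta> (cnj z) = cnj (\<theta> z)"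
proof -
  define b :: "complex \<Rightarrow> complex" where "b = real_powser \<beta>"
  define c :: "complex \<Rightarrow> complex" where "c = real_powser \<gamma>"
  define e where "e z = 1 + z * b (z^2) + z^2 * c (z^2)" for z
  have sq: "(\<lambda>z::complex. z^2) holomorphic_on UNIV" by (intro holomorphic_intros)
  have "(\<lambda>z. b (z^2)) holomorphic_on UNIV" "(\<lambda>z. c (z^2)) holomorphic_on UNIV"
    using holomorphic_on_compose_gen[OF sq _ subset_UNIV] eb ec
    by (simp_all add: b_def c_def o_def holomorphic_real_powser)
  then have "e holomorphic_on UNIV" unfolding e_def[abs_def] by (intro holomorphic_intros)
  moreover have "e z * e (-z) = 1" for z
  proof -
    define B C where "B = b (z^2)" and "C = c (z^2)"
    have "e z * e (-z) - 1 = (1 + z * B + z^2 * C) * (1 - z * B + z^2 * C) - 1"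
      by (simp add: e_def B_def C_def)
    also have "\<dots> = z^2 * (2 * C + z^2 * C^2 - B^2)" by algebra
    also have "\<dots> = 0" using rel[of "z^2"] by (simp add: B_def C_def b_def c_def)
    finally show ?thesis by simp
  qed
  moreover have "e 0 = 1" by (simp add: e_def)
  moreover have "e (cnj z) = cnj (e z)" for z
    by (simp add: e_def b_def c_def real_powser_cnj[OF eb] real_powser_cnj[OF ec] flip: complex_cnj_power)
  ultimately obtain \<theta> where "\<theta> holomorphic_on UNIV" "\<And>z. exp (\<theta> z) = e z"
    "\<And>z. \<theta> (-z) = - \<theta> z" "\<And>z. \<theta> (cnj z) = cnj (\<theta> z)"
    by (rule entire_odd_log) iprover
  then show ?thesis using that unfolding e_def b_def c_def by blast
qed

lemma analytic_sinhc_coshc_reparametrization: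
  fixes \<beta> \<gamma> :: "nat \<Rightarrow> real"
  assumes eb: "entire_coeffs \<beta>" and ec: "entire_coeffs \<gamma>" and b0: "\<beta> 0 = 1"
    and rel: "\<And>w::complex. 2 * real_powser \<gamma> w + w * (real_powser \<gamma> w)^2 = (real_powser \<beta> w)^2"
  obtains F where "real_analytic F" "F 0 = 1"
    "\<And>s. F s * real_powser sinhc_coeffs ((F s)^2 * s) = real_powser \<beta> s"
    "\<And>s. (F s)^2 * real_powser coshc_coeffs ((F s)^2 * s) = real_powser \<gamma> s"
proof -
  obtain \<theta> where hol_\<theta>: "\<theta> holomorphic_on UNIV"
    and exp_\<theta>: "\<And>z. exp (\<theta> z) = 1 + z * real_powser \<beta> (z^2) + z^2 * real_powser \<gamma> (z^2)"
    and odd: "\<And>z. \<theta> (-z) = - \<theta> z" and cnj_\<theta>: "\<And>z. \<theta> (cnj z) = cnj (\<theta> z)"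
    using odd_log_of_powser_relation[OF eb ec rel] by blast
  obtain G where hol_G: "G holomorphic_on UNIV" and factor: "\<And>z. \<theta> z = z * G (z^2)"
    using entire_odd_eq_mult_square[OF hol_\<theta> odd] by blast
  have "isCont G 0"
    using holomorphic_on_imp_continuous_on[OF hol_G] by (simp add: continuous_on_eq_continuous_at)
  note identities = sinhc_coshc_identities_of_odd_log[OF exp_\<theta> odd factor this
      isCont_real_powser[OF eb] isCont_real_powser[OF ec]]
  define F where "F s = Re (G (of_real s))" for s
  have GF: "G (of_real s) = of_real (F s)" for s
    using square_factor_cnj[OF hol_G factor cnj_\<theta>, of "of_real s"]
    by (simp add: F_def complex_eq_iff)
  have sinhc_F: "F s * real_powser sinhc_coeffs ((F s)^2 * s) = real_powser \<beta> s" for s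
  proof -
    have "complex_of_real (F s * real_powser sinhc_coeffs ((F s)^2 * s)) = complex_of_real (real_powser \<beta> s)"
      using identities(1)[of "of_real s"]
      by (simp only: GF of_real_mult of_real_power real_powser_of_real[OF eb]
          real_powser_of_real[OF entire_sinhc_coeffs, symmetric])
    then show ?thesis by (simp only: of_real_eq_iff)
  qed
  have coshc_F: "(F s)^2 * real_powser coshc_coeffs ((F s)^2 * s) = real_powser \<gamma> s" for s
  proof -
    have "complex_of_real ((F s)^2 * real_powser coshc_coeffs ((F s)^2 * s)) = complex_of_real (real_powser \<gamma> s)"
      using identities(2)[of "of_real s"]
      by (simp only: GF of_real_mult of_real_power real_powser_of_real[OF ec]
          real_powser_of_real[OF entire_coshc_coeffs, symmetric])
    then show ?thesis by (simp only: of_real_eq_iff)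
  qed
  have "F 0 = 1" using sinhc_F[of 0] b0 by (simp add: sinhc_coeffs_def)
  moreover have "real_analytic F"
    unfolding F_def[abs_def] by (rule real_analytic_Re_of_real_holomorphic[OF hol_G])
  ultimately show ?thesis using that sinhc_F coshc_F by blast
qed

lemma funpow_scaled_cubic_relation:
  fixes L :: "'a::real_vector \<Rightarrow> 'a"
  assumes lin: "linear L" and cubic: "\<And>z. L (L (L z)) = \<kappa> *\<^sub>R L z"
  shows "((\<lambda>z. f *\<^sub>R L z) ^^ (2*m+1)) z = (f * (f^2 * \<kappa>)^m) *\<^sub>R L z" (is "(?A ^^ _) z = _")
    and "((\<lambda>z. f *\<^sub>R L z) ^^ (2*m+2)) z = (f^2 * (f^2 * \<kappa>)^m) *\<^sub>R L (L z)"
proof -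
  have scaleR: "?A (c *\<^sub>R w) = c *\<^sub>R ?A w" for c w using lin by (simp add: linear_cmul)
  show odd: "(?A ^^ (2*m+1)) z = (f * (f^2 * \<kappa>)^m) *\<^sub>R L z" for m
  proof (induction m)
    case (Suc m)
    have "(?A ^^ (2*Suc m+1)) z = ?A (?A ((?A ^^ (2*m+1)) z))"
      by (simp add: numeral_eq_Suc)
    also have "\<dots> = (f * (f^2 * \<kappa>)^m) *\<^sub>R ?A (?A (L z))" by (simp only: Suc scaleR)
    also have "?A (?A (L z)) = (f^2 * \<kappa>) *\<^sub>R L z"
      using lin by (simp add: linear_cmul cubic power2_eq_square)
    finally show ?case by (simp add: mult_ac)
  qed simp
  have "(?A ^^ (2*m+2)) z = ?A ((?A ^^ (2*m+1)) z)" by (simp add: numeral_eq_Suc)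
  also have "\<dots> = (f * (f^2 * \<kappa>)^m) *\<^sub>R ?A (L z)" by (simp only: odd scaleR)
  finally show "(?A ^^ (2*m+2)) z = (f^2 * (f^2 * \<kappa>)^m) *\<^sub>R L (L z)"
    by (simp add: power2_eq_square mult_ac)
qed

lemma lin_exp_of_cubic_relation:
  fixes L :: "'a::real_normed_vector \<Rightarrow> 'a"
  assumes "linear L" and "\<And>z. L (L (L z)) = \<kappa> *\<^sub>R L z"
  shows "lin_exp (\<lambda>z. f *\<^sub>R L z) z =
    z + (f * real_powser sinhc_coeffs (f^2 * \<kappa>)) *\<^sub>R L z
      + (f^2 * real_powser coshc_coeffs (f^2 * \<kappa>)) *\<^sub>R L (L z)"
proof -
  define a where "a n = (1 / fact n) *\<^sub>R ((\<lambda>z. f *\<^sub>R L z) ^^ n) z" for n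
  note powers = funpow_scaled_cubic_relation[OF assms]
  have "(\<lambda>m. (f * (sinhc_coeffs m * (f^2 * \<kappa>)^m)) *\<^sub>R L z) sums
      ((f * real_powser sinhc_coeffs (f^2 * \<kappa>)) *\<^sub>R L z)"
    by (intro sums_scaleR_left sums_mult real_powser_sums_real entire_sinhc_coeffs)
  moreover have "a (2*m+1) = (f * (sinhc_coeffs m * (f^2 * \<kappa>)^m)) *\<^sub>R L z" for m
    by (simp only: a_def powers(1)) (simp add: sinhc_coeffs_def)
  ultimately have odd: "(\<lambda>m. a (2*m+1)) sums ((f * real_powser sinhc_coeffs (f^2 * \<kappa>)) *\<^sub>R L z)"
    by simp
  have "(\<lambda>m. (f^2 * (coshc_coeffs m * (f^2 * \<kappa>)^m)) *\<^sub>R L (L z)) sums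
      ((f^2 * real_powser coshc_coeffs (f^2 * \<kappa>)) *\<^sub>R L (L z))"
    by (intro sums_scaleR_left sums_mult real_powser_sums_real entire_coshc_coeffs)
  moreover have "a (2 * Suc m) = (f^2 * (coshc_coeffs m * (f^2 * \<kappa>)^m)) *\<^sub>R L (L z)" for m
  proof -
    have "2 * Suc m = 2*m+2" by simp
    then show ?thesis by (simp only: a_def powers(2)) (simp add: coshc_coeffs_def)
  qed
  ultimately have "(\<lambda>m. a (2 * Suc m)) sums ((f^2 * real_powser coshc_coeffs (f^2 * \<kappa>)) *\<^sub>R L (L z))"
    by simp
  then have even: "(\<lambda>m. a (2*m)) sums ((f^2 * real_powser coshc_coeffs (f^2 * \<kappa>)) *\<^sub>R L (L z) + z)"
    using sums_Suc_iff[of "\<lambda>m. a (2*m)"] by (simp add: a_def)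
  from sums_from_even_odd_terms[OF even odd] show ?thesis
    unfolding lin_exp_def a_def[symmetric] by (simp add: sums_iff algebra_simps)
qed

section \<open>Analytic linear Lie racks\<close>

lemma linear_eq_sum_axis:
  assumes "linear (f :: real^'n \<Rightarrow> real^'m)"
  shows "f v = (\<Sum>j\<in>UNIV. v$j *\<^sub>R f (axis j 1))"
proof -
  have "f v = f (\<Sum>j\<in>UNIV. v$j *\<^sub>R axis j 1)"
    using basis_expansion[of v] by (simp add: scalar_mult_eq_scaleR)
  also have "\<dots> = (\<Sum>j\<in>UNIV. v$j *\<^sub>R f (axis j 1))"
    using assms by (simp add: linear_sum linear_cmul)
  finally show ?thesis .
qed

lemma has_field_derivative_vec_nth:
  fixes w :: "real \<Rightarrow> real^'n"
  assumes "(w has_vector_derivative w') (at s)"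
  shows "((\<lambda>s. w s $ j) has_field_derivative w' $ j) (at s)"
  using bounded_linear.has_vector_derivative[OF bounded_linear_vec_nth assms, of j]
  by (simp add: has_real_derivative_iff_has_vector_derivative)

lemma sym_multilin_map_diag_scaleR:
  assumes "sym_multilin_map n A"
  shows "A (\<lambda>_. t *\<^sub>R x) z = t^n *\<^sub>R A (\<lambda>_. x) z"
proof -
  from assms have lin: "\<And>xs y i. i < n \<Longrightarrow> linear (\<lambda>t. A (xs(i := t)) y)"
    and local: "\<And>xs ys y. (\<forall>i<n. xs i = ys i) \<Longrightarrow> A xs y = A ys y"
    unfolding sym_multilin_map_def by blast+
  have "j \<le> n \<Longrightarrow> A (\<lambda>i. if i < j then t *\<^sub>R x else x) z = t^j *\<^sub>R A (\<lambda>_. x) z" for j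
  proof (induction j)
    case (Suc j)
    define f where "f = (\<lambda>i. if i < j then t *\<^sub>R x else x)"
    have "(\<lambda>i. if i < Suc j then t *\<^sub>R x else x) = f(j := t *\<^sub>R x)" "f(j := x) = f"
      by (auto simp: f_def fun_eq_iff)
    moreover have "A (f(j := t *\<^sub>R x)) z = t *\<^sub>R A (f(j := x)) z"
      using linear_cmul[OF lin[of j f z]] Suc.prems by simp
    ultimately show ?case using Suc by (simp add: f_def)
  qed simp
  from this[of n] show ?thesis
    using local[of "\<lambda>i. if i < n then t *\<^sub>R x else x" "\<lambda>_. t *\<^sub>R x" z] by simp
qed

lemma real_polynomial_function_sym_multilin_map_diag:
  assumes "sym_multilin_map n A"
  shows "real_polynomial_function (\<lambda>s. A (\<lambda>_. x0 + s *\<^sub>R w) z $ j)"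
proof -
  from assms have lin: "\<And>xs y i. i < n \<Longrightarrow> linear (\<lambda>t. A (xs(i := t)) y)"
    and local: "\<And>xs ys y. (\<forall>i<n. xs i = ys i) \<Longrightarrow> A xs y = A ys y"
    unfolding sym_multilin_map_def by blast+
  have "k \<le> n \<Longrightarrow> real_polynomial_function (\<lambda>s. A (\<lambda>i. if i < k then x0 + s *\<^sub>R w else xs i) z $ j)"
    for k xs
  proof (induction k arbitrary: xs)
    case (Suc k)
    define f where "f s = (\<lambda>i. if i < k then x0 + s *\<^sub>R w else xs i)" for s
    have split: "(\<lambda>s. A (\<lambda>i. if i < Suc k then x0 + s *\<^sub>R w else xs i) z $ j) =
        (\<lambda>s. A ((f s)(k := x0)) z $ j + s * A ((f s)(k := w)) z $ j)"
    proof
      fix s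
      have "(\<lambda>i. if i < Suc k then x0 + s *\<^sub>R w else xs i) = (f s)(k := x0 + s *\<^sub>R w)"
        by (auto simp: f_def fun_eq_iff)
      then show "A (\<lambda>i. if i < Suc k then x0 + s *\<^sub>R w else xs i) z $ j =
          A ((f s)(k := x0)) z $ j + s * A ((f s)(k := w)) z $ j"
        using linear_add[OF lin] linear_cmul[OF lin] Suc.prems by simp
    qed
    have "(f s)(k := v) = (\<lambda>i. if i < k then x0 + s *\<^sub>R w else (xs(k := v)) i)" for s v
      by (auto simp: f_def fun_eq_iff)
    then have "real_polynomial_function (\<lambda>s. A ((f s)(k := v)) z $ j)" for v
      using Suc by simp
    with real_polynomial_function_ident show ?case
      unfolding split by (intro real_polynomial_function.intros(3,4))
  qed (simp add: real_polynomial_function.intros(2))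
  moreover have "A (\<lambda>_. x0 + s *\<^sub>R w) z = A (\<lambda>i. if i < n then x0 + s *\<^sub>R w else x0) z" for s
    by (rule local) simp
  ultimately show ?thesis by (simp only:)
qed

locale analytic_rack =
  fixes br rk :: "real^'n \<Rightarrow> real^'n \<Rightarrow> real^'n"
  assumes analytic: "analytic_linear_lie_rack rk" and bracket: "rack_bracket_is rk br"
begin

lemma linear_rk: "linear (rk x)"
  using analytic by (auto simp: analytic_linear_lie_rack_def linear_lie_rack_def)

lemma bij_rk: "bij (rk x)"
  using analytic by (auto simp: analytic_linear_lie_rack_def linear_lie_rack_def)

lemma rk_self_distrib: "rk x (rk y z) = rk (rk x y) (rk x z)"
  using analytic by (auto simp: analytic_linear_lie_rack_def linear_lie_rack_def)

lemma rk_0_left [simp]: "rk 0 z = z"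
  using analytic by (auto simp: analytic_linear_lie_rack_def linear_lie_rack_def)

lemma rk_eq_0_iff [simp]: "rk x z = 0 \<longleftrightarrow> z = 0"
  using linear_0[OF linear_rk] bij_is_inj[OF bij_rk] by (metis injD)

lemma has_vector_derivative_rk_line: "((\<lambda>t. rk (t *\<^sub>R u) v) has_vector_derivative br u v) (at 0)"
  using bracket by (auto simp: rack_bracket_is_def)

definition Drk :: "(real^'n) \<times> (real^'n) \<Rightarrow> (real^'n) \<times> (real^'n) \<Rightarrow> real^'n" where
  "Drk = (SOME D. \<forall>p. ((\<lambda>(x, y). rk x y) has_derivative D p) (at p))"

lemma has_derivative_Drk: "((\<lambda>(x, y). rk x y) has_derivative Drk p) (at p)"
proof -
  have "smooth_map (\<lambda>(x, y). rk x y)"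
    using analytic unfolding analytic_linear_lie_rack_def linear_lie_rack_def by blast
  then have "\<exists>D. \<forall>p. ((\<lambda>(x, y). rk x y) has_derivative D p) (at p)"
    by (cases rule: smooth_map.cases) blast
  from someI_ex[OF this] show ?thesis unfolding Drk_def by blast
qed

lemma has_vector_derivative_rk_comp:
  assumes a: "(a has_vector_derivative a') (at t)" and b: "(b has_vector_derivative b') (at t)"
  shows "((\<lambda>s. rk (a s) (b s)) has_vector_derivative Drk (a t, b t) (a', b')) (at t)"
proof -
  have "((\<lambda>s. (a s, b s)) has_derivative (\<lambda>h. h *\<^sub>R (a', b'))) (at t)"
    using has_vector_derivative_Pair[OF a b] unfolding has_vector_derivative_def .
  from diff_chain_at[OF this has_derivative_Drk]
  have "((\<lambda>s. rk (a s) (b s)) has_derivative (\<lambda>h. Drk (a t, b t) (h *\<^sub>R (a', b')))) (at t)"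
    unfolding o_def by simp
  moreover have "linear (Drk (a t, b t))"
    using has_derivative_Drk has_derivative_linear by blast
  then have "(\<lambda>h. Drk (a t, b t) (h *\<^sub>R (a', b'))) = (\<lambda>h. h *\<^sub>R Drk (a t, b t) (a', b'))"
    using linear_cmul[of "Drk (a t, b t)" _ "(a', b')"] by (simp add: fun_eq_iff)
  ultimately show ?thesis unfolding has_vector_derivative_def by simp
qed

text \<open>Differentiating self-distributivity \<open>rk (t u) (rk y z) = rk (rk (t u) y) (rk (t u) z)\<close> at \<open>t = 0\<close>.\<close>

lemma Drk_bracket: "Drk (y, z) (br u y, br u z) = br u (rk y z)"
proof -
  have "((\<lambda>t. rk (rk (t *\<^sub>R u) y) (rk (t *\<^sub>R u) z)) has_vector_derivative Drk (y, z) (br u y, br u z)) (at 0)"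
    using has_vector_derivative_rk_comp[OF has_vector_derivative_rk_line has_vector_derivative_rk_line]
    by simp
  then have "((\<lambda>t. rk (t *\<^sub>R u) (rk y z)) has_vector_derivative Drk (y, z) (br u y, br u z)) (at 0)"
    by (simp flip: rk_self_distrib)
  then show ?thesis
    using vector_derivative_unique_at has_vector_derivative_rk_line by blast
qed

lemma rk_bracket_hom: "rk x (br u v) = br (rk x u) (rk x v)"
proof -
  have "bounded_linear (rk x)" using linear_rk linear_conv_bounded_linear by blast
  from bounded_linear.has_vector_derivative[OF this has_vector_derivative_rk_line]
  have "((\<lambda>t. rk x (rk (t *\<^sub>R u) v)) has_vector_derivative rk x (br u v)) (at 0)" by simp
  moreover have "(\<lambda>t. rk x (rk (t *\<^sub>R u) v)) = (\<lambda>t. rk (t *\<^sub>R rk x u) (rk x v))"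
    using linear_rk rk_self_distrib by (metis linear_cmul)
  ultimately show ?thesis
    using vector_derivative_unique_at has_vector_derivative_rk_line by metis
qed

text \<open>If \<open>g s = exp (s ad\<^sub>u)\<close>, both \<open>w(s) = rk (g s x) (g s z)\<close> (by \<open>Drk_bracket\<close>) and
  \<open>g s (rk x z)\<close> solve \<open>w' = ad\<^sub>u w\<close> with the same initial value; hence \<open>g (-s) w(s)\<close> is constant.\<close>

lemma rk_equivariant_flow:
  fixes g :: "real \<Rightarrow> real^'n \<Rightarrow> real^'n"
  assumes lin_g: "\<And>s. linear (g s)" and g0: "\<And>y. g 0 y = y"
    and deriv_g: "\<And>s y. ((\<lambda>s. g s y) has_vector_derivative br u (g s y)) (at s)"
    and inverse_g: "\<And>s y. g (-s) (g s y) = y"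
    and commute_g: "\<And>s y. g s (br u y) = br u (g s y)"
    and lin_br: "linear (br u)"
  shows "rk (g s x) (g s z) = g s (rk x z)"
proof -
  define w where "w s = rk (g s x) (g s z)" for s
  have deriv_w: "(w has_vector_derivative br u (w s)) (at s)" for s
    using has_vector_derivative_rk_comp[OF deriv_g deriv_g] unfolding w_def Drk_bracket .
  have deriv_g_neg: "((\<lambda>s. g (-s) e) has_vector_derivative - br u (g (-s) e)) (at s)" for e s
    using vector_diff_chain_at[OF has_vector_derivative_minus[OF has_vector_derivative_id] deriv_g]
    by (simp add: o_def)
  define \<psi> where "\<psi> s = (\<Sum>j\<in>UNIV. w s $ j *\<^sub>R g (-s) (axis j 1))" for s
  have \<psi>_eq: "\<psi> s = g (-s) (w s)" for s
    unfolding \<psi>_def using linear_eq_sum_axis[OF lin_g, of "-s" "w s"] by simp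
  have "(\<psi> has_vector_derivative 0) (at s)" for s
  proof -
    have "(\<psi> has_vector_derivative (\<Sum>j\<in>UNIV. w s $ j *\<^sub>R (- br u (g (-s) (axis j 1)))
        + br u (w s) $ j *\<^sub>R g (-s) (axis j 1))) (at s)"
      unfolding \<psi>_def
      by (intro has_vector_derivative_sum has_vector_derivative_scaleR
          has_field_derivative_vec_nth deriv_w deriv_g_neg)
    moreover have "(\<Sum>j\<in>UNIV. w s $ j *\<^sub>R (- br u (g (-s) (axis j 1)))
        + br u (w s) $ j *\<^sub>R g (-s) (axis j 1)) = 0"
    proof -
      have "linear (\<lambda>v. br u (g (-s) v))"
        using linear_compose[OF lin_g lin_br] by (simp add: o_def)
      from linear_eq_sum_axis[OF this, of "w s"]
      have "(\<Sum>j\<in>UNIV. w s $ j *\<^sub>R (- br u (g (-s) (axis j 1)))) = - br u (g (-s) (w s))"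
        by (simp add: sum_negf)
      moreover have "(\<Sum>j\<in>UNIV. br u (w s) $ j *\<^sub>R g (-s) (axis j 1)) = br u (g (-s) (w s))"
        using linear_eq_sum_axis[OF lin_g, of "-s" "br u (w s)"] commute_g by simp
      ultimately show ?thesis by (simp add: sum_subtractf sum_negf)
    qed
    ultimately show ?thesis by simp
  qed
  then obtain c where "\<And>s. \<psi> s = c"
    using has_vector_derivative_zero_constant[of UNIV \<psi>] by auto
  then have "g (-s) (w s) = g (-0) (w 0)" using \<psi>_eq by metis
  then have "g (-s) (w s) = rk x z" using g0 by (simp add: w_def)
  then show ?thesis using inverse_g[of "-s" "w s"] by (simp add: w_def)
qed

definition rack_coeffs :: "nat \<Rightarrow> (nat \<Rightarrow> real^'n) \<Rightarrow> real^'n \<Rightarrow> real^'n" where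
  "rack_coeffs = (SOME A. (\<forall>n\<ge>1. sym_multilin_map n (A n)) \<and>
     (\<forall>x y. (\<lambda>n. A (Suc n) (\<lambda>_. x) y) sums (rk x y - y)))"

lemma rack_coeffs:
  "\<forall>n\<ge>1. sym_multilin_map n (rack_coeffs n)"
  "(\<lambda>n. rack_coeffs (Suc n) (\<lambda>_. x) y) sums (rk x y - y)"
proof -
  have "\<exists>A. (\<forall>n\<ge>1. sym_multilin_map n (A n)) \<and> (\<forall>x y. (\<lambda>n. A (Suc n) (\<lambda>_. x) y) sums (rk x y - y))"
    using analytic unfolding analytic_linear_lie_rack_def by blast
  from someI_ex[OF this] show "\<forall>n\<ge>1. sym_multilin_map n (rack_coeffs n)"
    "(\<lambda>n. rack_coeffs (Suc n) (\<lambda>_. x) y) sums (rk x y - y)"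
    unfolding rack_coeffs_def by blast+
qed

definition hom_part :: "nat \<Rightarrow> real^'n \<Rightarrow> real^'n \<Rightarrow> real^'n" where
  "hom_part n x z = (if n = 0 then z else rack_coeffs n (\<lambda>_. x) z)"

lemma hom_part_0 [simp]: "hom_part 0 x z = z"
  by (simp add: hom_part_def)

lemma sums_hom_part: "(\<lambda>n. hom_part n x z) sums rk x z"
proof -
  have "(\<lambda>n. hom_part (Suc n) x z) sums (rk x z - z)"
    using rack_coeffs(2) by (simp add: hom_part_def)
  then show ?thesis by (subst (asm) sums_Suc_iff) simp
qed

lemma hom_part_scaleR: "hom_part n (t *\<^sub>R x) z = t^n *\<^sub>R hom_part n x z"
  using sym_multilin_map_diag_scaleR[of n "rack_coeffs n"] rack_coeffs(1)
  by (cases "n = 0") (simp_all add: hom_part_def)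

lemma hom_part_uminus: "hom_part n (- x) z = (-1)^n *\<^sub>R hom_part n x z"
  using hom_part_scaleR[of n "-1" x z] by simp

lemma sums_hom_part_line: "(\<lambda>n. t^n *\<^sub>R hom_part n x z) sums rk (t *\<^sub>R x) z"
  using sums_hom_part[of "t *\<^sub>R x" z] by (simp add: hom_part_scaleR)

lemma linear_hom_part: "linear (hom_part n x)"
proof (cases "n = 0")
  case True
  then have "hom_part n x = id" by (simp add: fun_eq_iff)
  then show ?thesis by (simp add: linear_id)
next
  case False
  then have "linear (rack_coeffs n (\<lambda>_. x))"
    using rack_coeffs(1) unfolding sym_multilin_map_def by simp
  moreover have "hom_part n x = rack_coeffs n (\<lambda>_. x)" using False by (simp add: fun_eq_iff hom_part_def)
  ultimately show ?thesis by simp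
qed

lemma hom_part_equivariant:
  assumes lin_g: "linear g" and equivariant: "\<And>x z. rk (g x) (g z) = g (rk x z)"
  shows "hom_part n (g x) (g z) = g (hom_part n x z)"
proof -
  have "bounded_linear g" using lin_g linear_conv_bounded_linear by blast
  from bounded_linear.sums[OF this sums_hom_part_line]
  have "(\<lambda>n. t^n *\<^sub>R g (hom_part n x z)) sums rk (t *\<^sub>R g x) (g z)" for t
    using equivariant[of "t *\<^sub>R x" z] lin_g by (simp add: linear_cmul)
  with sums_hom_part_line have "(\<lambda>n. hom_part n (g x) (g z)) = (\<lambda>n. g (hom_part n x z))"
    by (rule powser_coeffs_unique_vec)
  then show ?thesis by metis
qed

lemma hom_part_1: "hom_part 1 x z = br x z"
proof -
  have "hom_part 1 x z $ j = br x z $ j" for j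
  proof -
    define c where "c n = hom_part n x z $ j" for n
    have c_sums: "(\<lambda>n. c n * t^n) sums (rk (t *\<^sub>R x) z $ j)" for t
      using sums_vec_nth[OF sums_hom_part_line[of t x z], of j] by (simp add: c_def mult.commute)
    have "summable (\<lambda>n. c n * 1^n)" using c_sums[of 1] by (auto simp: sums_iff)
    from termdiffs_strong[OF this, of 0]
    have "DERIV (\<lambda>t. \<Sum>n. c n * t^n) 0 :> c 1" by (simp add: diffs_def)
    moreover have "(\<lambda>t. \<Sum>n. c n * t^n) = (\<lambda>t. rk (t *\<^sub>R x) z $ j)"
      using c_sums by (auto simp: sums_iff)
    ultimately have "DERIV (\<lambda>t. rk (t *\<^sub>R x) z $ j) 0 :> c 1" by simp
    moreover have "DERIV (\<lambda>t. rk (t *\<^sub>R x) z $ j) 0 :> br x z $ j"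
      by (rule has_field_derivative_vec_nth[OF has_vector_derivative_rk_line])
    ultimately show ?thesis unfolding c_def by (rule DERIV_unique)
  qed
  then show ?thesis by (simp add: vec_eq_iff)
qed

lemma hom_part_fixed:
  assumes "\<And>t. rk (t *\<^sub>R v) w = w" and "n \<ge> 1"
  shows "hom_part n v w = 0"
proof -
  have "(\<lambda>n. hom_part n v w) = (\<lambda>n. if n = 0 then w else 0)"
  proof (rule powser_coeffs_unique_vec)
    show "(\<lambda>n. t^n *\<^sub>R hom_part n v w) sums w" for t
      using sums_hom_part_line[of t v w] assms(1) by simp
    show "(\<lambda>n. t^n *\<^sub>R (if n = 0 then w else 0)) sums w" for t
      using sums_single[of 0 "\<lambda>_. w"] by (simp add: if_distrib cong: if_cong)
  qed
  then show ?thesis using assms(2) by (metis not_one_le_zero)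
qed

lemma real_polynomial_function_hom_part:
  "real_polynomial_function (\<lambda>s. hom_part n (x0 + s *\<^sub>R w) z $ j)"
  using real_polynomial_function_sym_multilin_map_diag[of n "rack_coeffs n" x0 w z j] rack_coeffs(1)
  by (cases "n = 0") (auto simp: hom_part_def)

end

text \<open>The shape \<open>c k(x)\<^sup>m ad\<^sub>x\<^sup>n\<^sup>-\<^sup>2\<^sup>m z\<close> (\<open>m = (n - 1) div 2\<close>) of the degree-\<open>n\<close> terms of
  \<open>exp (F (k x) ad\<^sub>x)\<close> when \<open>ad\<^sub>x\<^sup>3 = k(x) ad\<^sub>x\<close>.\<close>

definition ad_monomial ::
    "(real^'n \<Rightarrow> real^'n \<Rightarrow> real^'n) \<Rightarrow> (real^'n \<Rightarrow> real) \<Rightarrow> nat \<Rightarrow> real \<Rightarrow> real^'n \<Rightarrow> real^'n \<Rightarrow> real^'n"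
  where "ad_monomial br k n c x z =
    (c * k x ^ ((n - 1) div 2)) *\<^sub>R (if odd n then br x z else br x (br x z))"

lemma ad_monomial_scaleR:
  assumes lin_br: "\<And>x. linear (br x)" and scale_br: "\<And>t x z. br (t *\<^sub>R x) z = t *\<^sub>R br x z"
    and hom_k: "\<And>t x. k (t *\<^sub>R x) = t^2 * k x" and "n \<ge> 1"
  shows "ad_monomial br k n c (r *\<^sub>R x) z = r^n *\<^sub>R ad_monomial br k n c x z"
proof (cases "odd n")
  case True
  then obtain m where n: "n = 2*m+1" by (auto elim: oddE)
  have "ad_monomial br k n c (r *\<^sub>R x) z = (c * (r^2 * k x)^m * r) *\<^sub>R br x z"
    by (simp add: ad_monomial_def n hom_k scale_br)
  also have "\<dots> = r^n *\<^sub>R ad_monomial br k n c x z"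
    by (simp add: ad_monomial_def n power_mult_distrib power_mult[symmetric] power_add mult_ac)
  finally show ?thesis .
next
  case False
  then obtain m' where m': "n = 2*m'" by (auto elim: evenE)
  define m where "m = m' - 1"
  have n: "n = 2*m+2" using m' \<open>n \<ge> 1\<close> by (simp add: m_def)
  have m: "(2*m+2-1) div 2 = m" by simp
  have "ad_monomial br k n c (r *\<^sub>R x) z = (c * (r^2 * k x)^m * r^2) *\<^sub>R br x (br x z)"
    by (simp add: ad_monomial_def n m hom_k scale_br power2_eq_square linear_cmul[OF lin_br])
  also have "\<dots> = r^n *\<^sub>R ad_monomial br k n c x z"
  proof -
    have r: "r^n = (r^2)^m * r^2" unfolding n by (simp only: power_add power_mult)
    show ?thesis unfolding r by (simp add: ad_monomial_def n m power_mult_distrib mult_ac)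
  qed
  finally show ?thesis .
qed

lemma ad_monomial_automorphism:
  assumes "linear g" and "\<And>a b. br (g a) (g b) = g (br a b)" and "\<And>x. k (g x) = k x"
  shows "g (ad_monomial br k n c x z) = ad_monomial br k n c (g x) (g z)"
  using assms by (simp add: ad_monomial_def linear_cmul)

lemma entire_coeffs_if_summable_on_squares:
  fixes \<beta> :: "nat \<Rightarrow> real"
  assumes summable: "\<And>t. t \<noteq> 0 \<Longrightarrow> summable (\<lambda>m. \<beta> m * (t^2 * K)^m)" and "K \<noteq> 0"
  shows "entire_coeffs \<beta>"
  unfolding entire_coeffs_def
proof
  fix s :: real
  define t where "t = sqrt ((\<bar>s\<bar> + 1) / \<bar>K\<bar>)"
  have "t \<noteq> 0" "\<bar>t^2 * K\<bar> = \<bar>s\<bar> + 1" using \<open>K \<noteq> 0\<close> by (simp_all add: t_def abs_mult)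
  then have "summable (\<lambda>n. norm (\<beta> n * s^n))"
    using powser_insidea[OF summable] by simp
  then show "summable (\<lambda>n. \<beta> n * s^n)" by (rule summable_norm_cancel)
qed

lemma summable_if_summable_scaleR:
  fixes w :: "real^'n"
  assumes "summable (\<lambda>m. c m *\<^sub>R w)" and "w \<noteq> 0"
  shows "summable c"
proof -
  obtain j where "w $ j \<noteq> 0" using assms(2) by (auto simp: vec_eq_iff)
  moreover have "summable (\<lambda>m. w $ j * c m)"
    using summable_vec_nth[OF assms(1), of j] by (simp add: mult.commute)
  ultimately show ?thesis by (simp add: summable_cmult_iff)
qed

context analytic_rack
begin

lemma hom_part_ad_monomial_automorphism:
  assumes lin_g: "linear g" and "surj g" and equivariant: "\<And>x z. rk (g x) (g z) = g (rk x z)"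
    and hom_g: "\<And>a b. br (g a) (g b) = g (br a b)" and k_g: "\<And>x. k (g x) = k x"
    and x: "\<forall>z. hom_part n x z = ad_monomial br k n c x z"
  shows "\<forall>z. hom_part n (g x) z = ad_monomial br k n c (g x) z"
proof
  fix z
  obtain z' where z: "z = g z'" using \<open>surj g\<close> by (metis surjD)
  have "hom_part n (g x) (g z') = g (hom_part n x z')" by (rule hom_part_equivariant[OF lin_g equivariant])
  also have "\<dots> = ad_monomial br k n c (g x) (g z')"
    using x ad_monomial_automorphism[of g br k, OF lin_g hom_g k_g] by simp
  finally show "hom_part n (g x) z = ad_monomial br k n c (g x) z" using z by simp
qed

lemma hom_part_ad_monomial_scaleR:
  assumes "\<And>x. linear (br x)" and "\<And>t x z. br (t *\<^sub>R x) z = t *\<^sub>R br x z"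
    and "\<And>t x. k (t *\<^sub>R x) = t^2 * k x" and "n \<ge> 1"
    and "\<forall>z. hom_part n x z = ad_monomial br k n c x z"
  shows "\<forall>z. hom_part n (r *\<^sub>R x) z = ad_monomial br k n c (r *\<^sub>R x) z"
  using assms(5) by (simp add: hom_part_scaleR ad_monomial_scaleR[OF assms(1-4)])

lemma sums_hom_part_odd_even:
  "(\<lambda>m. t^(2*m) *\<^sub>R hom_part (2*m) v z) sums ((1/2) *\<^sub>R (rk (t *\<^sub>R v) z + rk ((-t) *\<^sub>R v) z))"
  "(\<lambda>m. t^(2*m+1) *\<^sub>R hom_part (2*m+1) v z) sums ((1/2) *\<^sub>R (rk (t *\<^sub>R v) z - rk ((-t) *\<^sub>R v) z))"
proof -
  have "(\<lambda>n. (-1::real)^n *\<^sub>R (t^n *\<^sub>R hom_part n v z)) sums rk ((-t) *\<^sub>R v) z"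
    using sums_hom_part_line[of "-t" v z] by (simp add: power_minus[of t])
  from sums_even_odd_terms[OF sums_hom_part_line this]
  show "(\<lambda>m. t^(2*m) *\<^sub>R hom_part (2*m) v z) sums ((1/2) *\<^sub>R (rk (t *\<^sub>R v) z + rk ((-t) *\<^sub>R v) z))"
    "(\<lambda>m. t^(2*m+1) *\<^sub>R hom_part (2*m+1) v z) sums ((1/2) *\<^sub>R (rk (t *\<^sub>R v) z - rk ((-t) *\<^sub>R v) z))"
    by simp_all
qed

text \<open>Convergence of the rack series along one line on which neither \<open>k\<close> nor the bracket
  vanishes already makes the coefficient series entire.\<close>

lemma entire_coeffs_odd_hom_parts:
  assumes odd: "\<And>m x z. hom_part (2*m+1) x z = (\<beta> m * k x ^ m) *\<^sub>R br x z"
    and "k v \<noteq> 0" and "br v z \<noteq> 0"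
  shows "entire_coeffs \<beta>"
proof (rule entire_coeffs_if_summable_on_squares[OF _ \<open>k v \<noteq> 0\<close>])
  fix t :: real assume "t \<noteq> 0"
  have eq: "t^(2*m+1) *\<^sub>R hom_part (2*m+1) v z = (t * (\<beta> m * (t^2 * k v)^m)) *\<^sub>R br v z" for m
  proof -
    have t: "t^(2*m+1) = t * (t^2)^m" by (simp add: power_mult)
    show ?thesis unfolding odd t by (simp add: power_mult_distrib mult_ac)
  qed
  have "summable (\<lambda>m. t^(2*m+1) *\<^sub>R hom_part (2*m+1) v z)"
    using sums_hom_part_odd_even(2) by (rule sums_summable)
  then have "summable (\<lambda>m. (t * (\<beta> m * (t^2 * k v)^m)) *\<^sub>R br v z)" unfolding eq .
  then have "summable (\<lambda>m. t * (\<beta> m * (t^2 * k v)^m))"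
    using \<open>br v z \<noteq> 0\<close> by (rule summable_if_summable_scaleR)
  then show "summable (\<lambda>m. \<beta> m * (t^2 * k v)^m)" using \<open>t \<noteq> 0\<close> by (simp add: summable_cmult_iff)
qed

lemma entire_coeffs_even_hom_parts:
  assumes even: "\<And>m x z. hom_part (2*m+2) x z = (\<gamma> m * k x ^ m) *\<^sub>R br x (br x z)"
    and "k v \<noteq> 0" and "br v (br v z) \<noteq> 0"
  shows "entire_coeffs \<gamma>"
proof (rule entire_coeffs_if_summable_on_squares[OF _ \<open>k v \<noteq> 0\<close>])
  fix t :: real assume "t \<noteq> 0"
  have eq: "t^(2*m+2) *\<^sub>R hom_part (2*m+2) v z = (t^2 * (\<gamma> m * (t^2 * k v)^m)) *\<^sub>R br v (br v z)"
    for m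
  proof -
    have t: "t^(2*m+2) = (t^2)^m * t^2" by (simp only: power_add power_mult)
    show ?thesis unfolding even t by (simp add: power_mult_distrib mult_ac)
  qed
  have "summable (\<lambda>m. t^(2*m) *\<^sub>R hom_part (2*m) v z)"
    using sums_hom_part_odd_even(1) by (rule sums_summable)
  then have "summable (\<lambda>m. t^(2*m+2) *\<^sub>R hom_part (2*m+2) v z)"
    using summable_Suc_iff[of "\<lambda>m. t^(2*m) *\<^sub>R hom_part (2*m) v z"] by simp
  then have "summable (\<lambda>m. (t^2 * (\<gamma> m * (t^2 * k v)^m)) *\<^sub>R br v (br v z))" unfolding eq .
  then have "summable (\<lambda>m. t^2 * (\<gamma> m * (t^2 * k v)^m))"
    using \<open>br v (br v z) \<noteq> 0\<close> by (rule summable_if_summable_scaleR)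
  then show "summable (\<lambda>m. \<gamma> m * (t^2 * k v)^m)" using \<open>t \<noteq> 0\<close> by (simp add: summable_cmult_iff)
qed

lemma rk_eq_ad_expansion:
  assumes odd: "\<And>m x z. hom_part (2*m+1) x z = (\<beta> m * k x ^ m) *\<^sub>R br x z"
    and even: "\<And>m x z. hom_part (2*m+2) x z = (\<gamma> m * k x ^ m) *\<^sub>R br x (br x z)"
    and "entire_coeffs \<beta>" and "entire_coeffs \<gamma>"
  shows "rk x z = z + real_powser \<beta> (k x) *\<^sub>R br x z + real_powser \<gamma> (k x) *\<^sub>R br x (br x z)"
proof -
  have odd_sums: "(\<lambda>m. hom_part (2*m+1) x z) sums (real_powser \<beta> (k x) *\<^sub>R br x z)"
    unfolding odd by (intro sums_scaleR_left real_powser_sums_real \<open>entire_coeffs \<beta>\<close>)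
  have "hom_part (2 * Suc m) x z = (\<gamma> m * k x ^ m) *\<^sub>R br x (br x z)" for m
    using even[of m x z] by simp
  then have "(\<lambda>m. hom_part (2 * Suc m) x z) sums (real_powser \<gamma> (k x) *\<^sub>R br x (br x z))"
    by (simp only:) (intro sums_scaleR_left real_powser_sums_real \<open>entire_coeffs \<gamma>\<close>)
  then have "(\<lambda>m. hom_part (2*m) x z) sums (real_powser \<gamma> (k x) *\<^sub>R br x (br x z) + hom_part (2*0) x z)"
    using sums_Suc_iff[of "\<lambda>m. hom_part (2*m) x z"] by blast
  then have "(\<lambda>m. hom_part (2*m) x z) sums (z + real_powser \<gamma> (k x) *\<^sub>R br x (br x z))"
    by (simp add: add.commute)
  from sums_from_even_odd_terms[OF this odd_sums]
  have "(\<lambda>n. hom_part n x z) sums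
      (z + real_powser \<gamma> (k x) *\<^sub>R br x (br x z) + real_powser \<beta> (k x) *\<^sub>R br x z)" .
  with sums_hom_part show ?thesis by (simp add: sums_iff algebra_simps)
qed

lemma rk_ad_expansion:
  assumes "\<And>x. linear (br x)"
    and ad_monomial: "\<And>n. n \<ge> 1 \<Longrightarrow> \<exists>c. \<forall>x z. hom_part n x z = ad_monomial br k n c x z"
    and "k v \<noteq> 0" and "br v z0 \<noteq> 0" and "br v (br v z1) \<noteq> 0"
  obtains \<beta> \<gamma> where "entire_coeffs \<beta>" "entire_coeffs \<gamma>" "\<beta> 0 = 1"
    "\<And>x z. rk x z = z + real_powser \<beta> (k x) *\<^sub>R br x z + real_powser \<gamma> (k x) *\<^sub>R br x (br x z)"
proof -
  define c where "c n = (SOME c. \<forall>x z. hom_part n x z = ad_monomial br k n c x z)" for n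
  have c: "hom_part n x z = ad_monomial br k n (c n) x z" if "n \<ge> 1" for n x z
    using someI_ex[OF ad_monomial[OF that]] unfolding c_def by blast
  define \<beta> \<gamma> where "\<beta> m = c (2*m+1)" and "\<gamma> m = c (2*m+2)" for m
  have odd: "hom_part (2*m+1) x z = (\<beta> m * k x ^ m) *\<^sub>R br x z" for m x z
    using c[of "2*m+1" x z] by (simp add: ad_monomial_def \<beta>_def)
  have even: "hom_part (2*m+2) x z = (\<gamma> m * k x ^ m) *\<^sub>R br x (br x z)" for m x z
    using c[of "2*m+2" x z] by (simp add: ad_monomial_def \<gamma>_def)
  have "\<beta> 0 *\<^sub>R br v z0 = br v z0" using odd[of 0 v z0] hom_part_1[of v z0] by simp
  then have "\<beta> 0 = 1" using \<open>br v z0 \<noteq> 0\<close> by (metis scaleR_cancel_right scaleR_one)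
  with entire_coeffs_odd_hom_parts[OF odd assms(3,4)] entire_coeffs_even_hom_parts[OF even assms(3,5)]
  show ?thesis using that rk_eq_ad_expansion[OF odd even] by blast
qed

end

lemma lin_exp_form_if_ad_expansion:
  fixes rk br :: "real^'n \<Rightarrow> real^'n \<Rightarrow> real^'n" and k :: "real^'n \<Rightarrow> real" and \<sigma> :: real
  assumes "entire_coeffs \<beta>" and "entire_coeffs \<gamma>" and "\<beta> 0 = 1" and "\<sigma> \<noteq> 0"
    and ray: "\<And>s. s > 0 \<Longrightarrow>
      2 * real_powser \<gamma> (\<sigma> * s) + (\<sigma> * s) * (real_powser \<gamma> (\<sigma> * s))^2 = (real_powser \<beta> (\<sigma> * s))^2"
    and expansion: "\<And>x z. rk x z = z + real_powser \<beta> (k x) *\<^sub>R br x z + real_powser \<gamma> (k x) *\<^sub>R br x (br x z)"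
    and "\<And>x. linear (br x)" and "\<And>x z. br x (br x (br x z)) = k x *\<^sub>R br x z"
  shows "\<exists>F. real_analytic F \<and> F 0 = 1 \<and> (\<forall>x y. rk x y = lin_exp (\<lambda>z. F (k x) *\<^sub>R br x z) y)"
proof -
  define h :: "complex \<Rightarrow> complex"
    where "h w = 2 * real_powser \<gamma> w + w * (real_powser \<gamma> w)^2 - (real_powser \<beta> w)^2" for w
  have "h w = 0" for w
  proof (rule holomorphic_eq_0_if_eq_0_on_ray[where h = h, OF _ \<open>\<sigma> \<noteq> 0\<close>])
    show "h holomorphic_on UNIV"
      unfolding h_def[abs_def] using holomorphic_real_powser assms(1,2) by (intro holomorphic_intros) auto
    fix s :: real assume "s > 0"
    have "h (of_real (\<sigma> * s)) = of_real (2 * real_powser \<gamma> (\<sigma> * s)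
        + (\<sigma> * s) * (real_powser \<gamma> (\<sigma> * s))^2 - (real_powser \<beta> (\<sigma> * s))^2)"
      unfolding h_def real_powser_of_real[OF assms(1)] real_powser_of_real[OF assms(2)] by simp
    then show "h (of_real (\<sigma> * s)) = 0" using ray[OF \<open>s > 0\<close>] by simp
  qed
  then obtain F where F: "real_analytic F" "F 0 = 1"
    "\<And>s. F s * real_powser sinhc_coeffs ((F s)^2 * s) = real_powser \<beta> s"
    "\<And>s. (F s)^2 * real_powser coshc_coeffs ((F s)^2 * s) = real_powser \<gamma> s"
    using analytic_sinhc_coshc_reparametrization[OF assms(1-3)] unfolding h_def by (metis eq_iff_diff_eq_0)
  have "rk x y = lin_exp (\<lambda>z. F (k x) *\<^sub>R br x z) y" for x y
    using lin_exp_of_cubic_relation[OF assms(7,8)] expansion F(3,4) by simp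
  with F(1,2) show ?thesis by blast
qed

lemma vec3_eq_iff: "(x::real^3) = y \<longleftrightarrow> x$1 = y$1 \<and> x$2 = y$2 \<and> x$3 = y$3"
  by (simp add: vec_eq_iff forall_3)

lemma has_vector_derivative_vector3:
  assumes "(f1 has_real_derivative d1) (at t)" "(f2 has_real_derivative d2) (at t)"
    "(f3 has_real_derivative d3) (at t)"
  shows "((\<lambda>t. vector [f1 t, f2 t, f3 t] :: real^3) has_vector_derivative vector [d1, d2, d3]) (at t)"
proof -
  have expand: "(vector [a, b, c] :: real^3) = a *\<^sub>R axis 1 1 + b *\<^sub>R axis 2 1 + c *\<^sub>R axis 3 1" for a b c
    by (simp add: vec3_eq_iff axis_def)
  have "((\<lambda>x. f x *\<^sub>R v) has_vector_derivative d *\<^sub>R v) (at t)"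
    if "(f has_real_derivative d) (at t)" for f d and v :: "real^3"
    using has_vector_derivative_scaleR[OF that has_vector_derivative_const[of v]] by simp
  with assms show ?thesis unfolding expand by (intro has_vector_derivative_add)
qed

definition e1 :: "real^3" where "e1 = vector [1, 0, 0]"
definition e2 :: "real^3" where "e2 = vector [0, 1, 0]"
definition e3 :: "real^3" where "e3 = vector [0, 0, 1]"

lemma e123_components [simp]:
  "e1$1 = 1" "e1$2 = 0" "e1$3 = 0" "e2$1 = 0" "e2$2 = 1" "e2$3 = 0" "e3$1 = 0" "e3$2 = 0" "e3$3 = 1"
  by (simp_all add: e1_def e2_def e3_def)

lemma linear_eq_e123:
  assumes "linear (M :: real^3 \<Rightarrow> real^3)"
  shows "M z = z$1 *\<^sub>R M e1 + z$2 *\<^sub>R M e2 + z$3 *\<^sub>R M e3"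
proof -
  have "axis 1 1 = e1" "axis 2 1 = e2" "axis 3 1 = e3" by (simp_all add: vec3_eq_iff axis_def)
  with linear_eq_sum_axis[OF assms, of z] show ?thesis by (simp add: sum_3)
qed

lemma polar_coordinates:
  fixes a b :: real
  obtains t where "a = sqrt (a^2 + b^2) * cos t" "b = sqrt (a^2 + b^2) * sin t"
proof -
  have "Complex a b = rcis (cmod (Complex a b)) (Arg (Complex a b))" by (simp add: rcis_cmod_Arg)
  then show ?thesis
    by (intro that[of "Arg (Complex a b)"]) (simp_all add: complex_eq_iff cmod_def)
qed

section \<open>The Lie algebra \<open>so(3)\<close>\<close>

lemma so3_bracket_components [simp]:
  "so3_bracket x y $ 1 = x$2 * y$3 - x$3 * y$2"
  "so3_bracket x y $ 2 = x$3 * y$1 - x$1 * y$3"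
  "so3_bracket x y $ 3 = x$1 * y$2 - x$2 * y$1"
  by (simp_all add: so3_bracket_def)

lemma linear_so3_bracket: "linear (so3_bracket x)"
  by (rule linearI) (simp_all add: vec3_eq_iff algebra_simps)

lemma so3_bracket_scaleR: "so3_bracket (t *\<^sub>R x) z = t *\<^sub>R so3_bracket x z"
  by (simp add: vec3_eq_iff algebra_simps)

definition so3_killing :: "real^3 \<Rightarrow> real" where "so3_killing x = - (x$1^2 + x$2^2 + x$3^2)"

lemma killing_half_so3: "killing_half so3_bracket x = so3_killing x"
  by (simp add: killing_half_def so3_killing_def sum_3 axis_def power2_eq_square algebra_simps)

lemma so3_killing_scaleR: "so3_killing (t *\<^sub>R x) = t^2 * so3_killing x"
  by (simp add: so3_killing_def power_mult_distrib algebra_simps)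

lemma so3_ad_cubed: "so3_bracket x (so3_bracket x (so3_bracket x z)) = so3_killing x *\<^sub>R so3_bracket x z"
  by (simp add: vec3_eq_iff so3_killing_def power2_eq_square algebra_simps)

text \<open>\<open>rot_x (cos \<theta>) (sin \<theta>) = exp (\<theta> ad\<^sub>e\<^sub>1)\<close> and \<open>rot_z (cos \<theta>) (sin \<theta>) = exp (\<theta> ad\<^sub>e\<^sub>3)\<close>.\<close>

definition rot_x :: "real \<Rightarrow> real \<Rightarrow> real^3 \<Rightarrow> real^3" where
  "rot_x c s x = vector [x$1, c * x$2 - s * x$3, s * x$2 + c * x$3]"

definition rot_z :: "real \<Rightarrow> real \<Rightarrow> real^3 \<Rightarrow> real^3" where
  "rot_z c s x = vector [c * x$1 - s * x$2, s * x$1 + c * x$2, x$3]"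

lemma rot_x_components [simp]:
  "rot_x c s x $ 1 = x$1" "rot_x c s x $ 2 = c * x$2 - s * x$3" "rot_x c s x $ 3 = s * x$2 + c * x$3"
  by (simp_all add: rot_x_def)

lemma rot_z_components [simp]:
  "rot_z c s x $ 1 = c * x$1 - s * x$2" "rot_z c s x $ 2 = s * x$1 + c * x$2" "rot_z c s x $ 3 = x$3"
  by (simp_all add: rot_z_def)

lemma linear_rot_x: "linear (rot_x c s)"
  by (rule linearI) (simp_all add: vec3_eq_iff algebra_simps)

lemma linear_rot_z: "linear (rot_z c s)"
  by (rule linearI) (simp_all add: vec3_eq_iff algebra_simps)

lemma
  assumes "c^2 + s^2 = 1"
  shows so3_bracket_rot_x: "so3_bracket (rot_x c s a) (rot_x c s b) = rot_x c s (so3_bracket a b)"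
    and so3_bracket_rot_z: "so3_bracket (rot_z c s a) (rot_z c s b) = rot_z c s (so3_bracket a b)"
    and so3_killing_rot_x: "so3_killing (rot_x c s x) = so3_killing x"
    and so3_killing_rot_z: "so3_killing (rot_z c s x) = so3_killing x"
    and rot_x_inverse: "rot_x c (-s) (rot_x c s x) = x"
    and rot_z_inverse: "rot_z c (-s) (rot_z c s x) = x"
  using assms unfolding vec3_eq_iff so3_killing_def by (simp_all, algebra+)

lemma surj_rot_x: "c^2 + s^2 = 1 \<Longrightarrow> surj (rot_x c s)"
  by (metis rot_x_inverse add.commute power2_minus surjI)

lemma surj_rot_z: "c^2 + s^2 = 1 \<Longrightarrow> surj (rot_z c s)"
  by (metis rot_z_inverse add.commute power2_minus surjI)

lemma has_vector_derivative_rot_x: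
  "((\<lambda>t. rot_x (cos t) (sin t) y) has_vector_derivative so3_bracket e1 (rot_x (cos t) (sin t) y)) (at t)"
proof -
  have "((\<lambda>t. vector [y$1, cos t * y$2 - sin t * y$3, sin t * y$2 + cos t * y$3] :: real^3)
      has_vector_derivative vector [0, - sin t * y$2 - cos t * y$3, cos t * y$2 - sin t * y$3]) (at t)"
    by (intro has_vector_derivative_vector3 derivative_eq_intros) auto
  moreover have "vector [0, - sin t * y$2 - cos t * y$3, cos t * y$2 - sin t * y$3] =
      so3_bracket e1 (rot_x (cos t) (sin t) y)"
    by (simp add: vec3_eq_iff)
  ultimately show ?thesis by (simp add: rot_x_def)
qed

lemma has_vector_derivative_rot_z:
  "((\<lambda>t. rot_z (cos t) (sin t) y) has_vector_derivative so3_bracket e3 (rot_z (cos t) (sin t) y)) (at t)"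
proof -
  have "((\<lambda>t. vector [cos t * y$1 - sin t * y$2, sin t * y$1 + cos t * y$2, y$3] :: real^3)
      has_vector_derivative vector [- sin t * y$1 - cos t * y$2, cos t * y$1 - sin t * y$2, 0]) (at t)"
    by (intro has_vector_derivative_vector3 derivative_eq_intros) auto
  moreover have "vector [- sin t * y$1 - cos t * y$2, cos t * y$1 - sin t * y$2, 0] =
      so3_bracket e3 (rot_z (cos t) (sin t) y)"
    by (simp add: vec3_eq_iff)
  ultimately show ?thesis by (simp add: rot_z_def)
qed

lemma so3_orbit_of_axis:
  obtains r \<theta> \<phi> where "x = rot_z (cos \<phi>) (sin \<phi>) (rot_x (cos \<theta>) (sin \<theta>) (r *\<^sub>R e3))"
proof -
  define \<rho> where "\<rho> = sqrt (x$2^2 + (- x$1)^2)"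
  obtain \<phi> where \<phi>: "x$2 = \<rho> * cos \<phi>" "- x$1 = \<rho> * sin \<phi>"
    unfolding \<rho>_def by (rule polar_coordinates)
  define r where "r = sqrt (x$3^2 + (- \<rho>)^2)"
  obtain \<theta> where \<theta>: "x$3 = r * cos \<theta>" "- \<rho> = r * sin \<theta>"
    unfolding r_def by (rule polar_coordinates)
  have "rot_x (cos \<theta>) (sin \<theta>) (r *\<^sub>R e3) = vector [0, \<rho>, x$3]"
    using \<theta> by (auto simp: vec3_eq_iff algebra_simps)
  moreover have "rot_z (cos \<phi>) (sin \<phi>) (vector [0, \<rho>, x$3]) = x"
    using \<phi> by (auto simp: vec3_eq_iff algebra_simps)
  ultimately show ?thesis using that by metis
qed

lemma commute_quarter_rot_z:
  fixes M :: "real^3 \<Rightarrow> real^3"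
  assumes "linear M" and commute: "\<And>z. M (rot_z 0 1 z) = rot_z 0 1 (M z)"
  obtains p q c where "\<And>z. M z = vector [p * z$1 - q * z$2, q * z$1 + p * z$2, c * z$3]"
proof -
  have rot: "rot_z 0 1 e1 = e2" "rot_z 0 1 e2 = - e1" "rot_z 0 1 e3 = e3" by (simp_all add: vec3_eq_iff)
  have e2: "M e2 = rot_z 0 1 (M e1)" using commute[of e1] unfolding rot .
  have e1: "- M e1 = rot_z 0 1 (M e2)"
    using commute[of e2] unfolding rot linear_neg[OF \<open>linear M\<close>] .
  have e3: "M e3 = rot_z 0 1 (M e3)" using commute[of e3] unfolding rot .
  have "M e2 $ 1 = - M e1 $ 2" "M e2 $ 2 = M e1 $ 1" "M e2 $ 3 = M e1 $ 3" using e2 by simp_all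
  moreover have "- M e1 $ 3 = M e2 $ 3" using arg_cong[OF e1, of "\<lambda>v. v $ 3"] by simp
  moreover from e3 have "M e3 $ 1 = rot_z 0 1 (M e3) $ 1" "M e3 $ 2 = rot_z 0 1 (M e3) $ 2"
    by (rule arg_cong)+
  then have "M e3 $ 1 = - M e3 $ 2" "M e3 $ 2 = M e3 $ 1"
    unfolding rot_z_components by linarith+
  ultimately have "M e2 $ 1 = - M e1 $ 2" "M e2 $ 2 = M e1 $ 1" "M e1 $ 3 = 0" "M e2 $ 3 = 0"
      "M e3 $ 1 = 0" "M e3 $ 2 = 0"
    by linarith+
  then have "M z = vector [M e1 $ 1 * z$1 - M e1 $ 2 * z$2, M e1 $ 2 * z$1 + M e1 $ 1 * z$2, M e3 $ 3 * z$3]"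
    for z using linear_eq_e123[OF \<open>linear M\<close>, of z] by (simp add: vec3_eq_iff algebra_simps)
  then show ?thesis by (rule that)
qed

locale so3_rack = analytic_rack so3_bracket rk for rk :: "real^3 \<Rightarrow> real^3 \<Rightarrow> real^3"
begin

lemma rk_rot_x_equivariant:
  "rk (rot_x (cos \<theta>) (sin \<theta>) x) (rot_x (cos \<theta>) (sin \<theta>) z) = rot_x (cos \<theta>) (sin \<theta>) (rk x z)"
proof (rule rk_equivariant_flow[where g = "\<lambda>\<theta>. rot_x (cos \<theta>) (sin \<theta>)" and u = e1])
  show "rot_x (cos (-s)) (sin (-s)) (rot_x (cos s) (sin s) y) = y" for s y
    by (simp add: rot_x_inverse)
  show "rot_x (cos s) (sin s) (so3_bracket e1 y) = so3_bracket e1 (rot_x (cos s) (sin s) y)" for s y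
    by (simp add: vec3_eq_iff algebra_simps)
qed (simp_all add: linear_rot_x linear_so3_bracket has_vector_derivative_rot_x vec3_eq_iff)

lemma rk_rot_z_equivariant:
  "rk (rot_z (cos \<theta>) (sin \<theta>) x) (rot_z (cos \<theta>) (sin \<theta>) z) = rot_z (cos \<theta>) (sin \<theta>) (rk x z)"
proof (rule rk_equivariant_flow[where g = "\<lambda>\<theta>. rot_z (cos \<theta>) (sin \<theta>)" and u = e3])
  show "rot_z (cos (-s)) (sin (-s)) (rot_z (cos s) (sin s) y) = y" for s y
    by (simp add: rot_z_inverse)
  show "rot_z (cos s) (sin s) (so3_bracket e3 y) = so3_bracket e3 (rot_z (cos s) (sin s) y)" for s y
    by (simp add: vec3_eq_iff algebra_simps)
qed (simp_all add: linear_rot_z linear_so3_bracket has_vector_derivative_rot_z vec3_eq_iff)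

lemma rk_quarter_rot_z_equivariant: "rk (rot_z 0 1 x) (rot_z 0 1 z) = rot_z 0 1 (rk x z)"
  using rk_rot_z_equivariant[of "pi/2"] by simp

lemma rk_half_rot_x_equivariant: "rk (rot_x (-1) 0 x) (rot_x (-1) 0 z) = rot_x (-1) 0 (rk x z)"
  using rk_rot_x_equivariant[of pi] by simp

lemma rk_axis_fixes_axis: "rk (r *\<^sub>R e3) e3 = e3"
proof -
  define M where "M = rk (r *\<^sub>R e3)"
  have "rot_z 0 1 (r *\<^sub>R e3) = r *\<^sub>R e3" by (simp add: vec3_eq_iff)
  then have "M (rot_z 0 1 z) = rot_z 0 1 (M z)" for z
    using rk_quarter_rot_z_equivariant[of "r *\<^sub>R e3" z] by (simp add: M_def)
  then obtain p q c where M: "\<And>z. M z = vector [p * z$1 - q * z$2, q * z$1 + p * z$2, c * z$3]"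
    using commute_quarter_rot_z[of M] linear_rk unfolding M_def by blast
  have "M (so3_bracket e2 e3) = so3_bracket (M e2) (M e3)"
    unfolding M_def by (rule rk_bracket_hom)
  then have "p = p * c" "q = q * c" by (simp_all add: M vec3_eq_iff)
  moreover have "e1 \<noteq> 0" by (simp add: vec3_eq_iff)
  then have "M e1 \<noteq> 0" unfolding M_def by simp
  then have "p \<noteq> 0 \<or> q \<noteq> 0" by (simp add: M vec3_eq_iff)
  ultimately have "c = 1" by auto
  then show ?thesis by (simp add: M_def[symmetric] M vec3_eq_iff)
qed

text \<open>On the rotation axis, the homogeneous parts commute with the quarter rotation about it, and
  the half rotation about \<open>e1\<close> reverses the axis; this fixes their shape up to one constant.\<close>

lemma hom_part_axis_shape:
  assumes "n \<ge> 1"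
  obtains p q where "\<And>z. hom_part n e3 z = vector [p * z$1 - q * z$2, q * z$1 + p * z$2, 0]"
    and "(-1)^n * p = p" and "(-1)^n * q = - q"
proof -
  have "rot_z 0 1 e3 = e3" by (simp add: vec3_eq_iff)
  then have "hom_part n e3 (rot_z 0 1 z) = rot_z 0 1 (hom_part n e3 z)" for z
    using hom_part_equivariant[OF linear_rot_z rk_quarter_rot_z_equivariant, of n e3 z] by simp
  then obtain p q c where M: "\<And>z. hom_part n e3 z = vector [p * z$1 - q * z$2, q * z$1 + p * z$2, c * z$3]"
    using commute_quarter_rot_z[of "hom_part n e3"] linear_hom_part by blast
  have "hom_part n e3 e3 = 0" using hom_part_fixed[OF rk_axis_fixes_axis \<open>n \<ge> 1\<close>] .
  then have "c = 0" by (simp add: M vec3_eq_iff)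
  have "rot_x (-1) 0 e3 = - e3" "rot_x (-1) 0 e1 = e1" by (simp_all add: vec3_eq_iff)
  then have "hom_part n (- e3) e1 = rot_x (-1) 0 (hom_part n e3 e1)"
    using hom_part_equivariant[OF linear_rot_x rk_half_rot_x_equivariant, of n e3 e1] by simp
  then have "(-1)^n * p = p \<and> (-1)^n * q = - q"
    unfolding hom_part_uminus by (simp add: M vec3_eq_iff)
  with M \<open>c = 0\<close> show ?thesis using that by auto
qed

lemma hom_part_axis_ad_monomial:
  assumes "n \<ge> 1"
  obtains c where "\<And>z. hom_part n e3 z = ad_monomial so3_bracket so3_killing n c e3 z"
proof -
  obtain p q where M: "\<And>z. hom_part n e3 z = vector [p * z$1 - q * z$2, q * z$1 + p * z$2, 0]"
    and parity: "(-1)^n * p = p" "(-1)^n * q = - q"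
    using hom_part_axis_shape[OF assms] by blast
  define m where "m = (n - 1) div 2"
  have ad: "ad_monomial so3_bracket so3_killing n c e3 z =
      (c * (-1)^m) *\<^sub>R (if odd n then so3_bracket e3 z else so3_bracket e3 (so3_bracket e3 z))" for c z
    unfolding ad_monomial_def m_def by (simp add: so3_killing_def)
  have sign: "(-1::real)^m * (-1)^m = 1" by (simp flip: power_add)
  show ?thesis
  proof (cases "odd n")
    case True
    with parity have "p = 0" by simp
    then show ?thesis
      using True by (intro that[of "q * (-1)^m"]) (simp add: M ad vec3_eq_iff sign mult.assoc)
  next
    case False
    with parity have "q = 0" by simp
    then show ?thesis
      using False by (intro that[of "- p * (-1)^m"]) (simp add: M ad vec3_eq_iff sign mult.assoc)
  qed
qed

lemma hom_part_ad_monomial: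
  assumes "n \<ge> 1"
  shows "\<exists>c. \<forall>x z. hom_part n x z = ad_monomial so3_bracket so3_killing n c x z"
proof -
  obtain c where axis: "\<forall>z. hom_part n e3 z = ad_monomial so3_bracket so3_killing n c e3 z"
    using hom_part_axis_ad_monomial[OF assms] by blast
  have "\<forall>z. hom_part n x z = ad_monomial so3_bracket so3_killing n c x z" for x
  proof -
    obtain r \<theta> \<phi> where x: "x = rot_z (cos \<phi>) (sin \<phi>) (rot_x (cos \<theta>) (sin \<theta>) (r *\<^sub>R e3))"
      by (rule so3_orbit_of_axis)
    have cos_sin: "(cos t)^2 + (sin t)^2 = 1" for t :: real by simp
    have "\<forall>z. hom_part n (r *\<^sub>R e3) z = ad_monomial so3_bracket so3_killing n c (r *\<^sub>R e3) z"
      by (rule hom_part_ad_monomial_scaleR[OF linear_so3_bracket so3_bracket_scaleR so3_killing_scaleR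
            assms axis])
    from hom_part_ad_monomial_automorphism[OF linear_rot_x surj_rot_x[OF cos_sin] rk_rot_x_equivariant
        so3_bracket_rot_x[OF cos_sin] so3_killing_rot_x[OF cos_sin] this]
    have "\<forall>z. hom_part n (rot_x (cos \<theta>) (sin \<theta>) (r *\<^sub>R e3)) z =
        ad_monomial so3_bracket so3_killing n c (rot_x (cos \<theta>) (sin \<theta>) (r *\<^sub>R e3)) z" .
    from hom_part_ad_monomial_automorphism[OF linear_rot_z surj_rot_z[OF cos_sin] rk_rot_z_equivariant
        so3_bracket_rot_z[OF cos_sin] so3_killing_rot_z[OF cos_sin] this]
    show ?thesis unfolding x .
  qed
  then show ?thesis by blast
qed

text \<open>Comparing \<open>rk x [e1, e2] = [rk x e1, rk x e2]\<close> for \<open>x\<close> on the axis, where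
  \<open>so3_killing x = - s < 0\<close>.\<close>

lemma powser_relation:
  fixes s :: real
  assumes "\<And>x z. rk x z = z + real_powser \<beta> (so3_killing x) *\<^sub>R so3_bracket x z
      + real_powser \<gamma> (so3_killing x) *\<^sub>R so3_bracket x (so3_bracket x z)"
    and "s > 0"
  shows "2 * real_powser \<gamma> ((-1) * s) + ((-1) * s) * (real_powser \<gamma> ((-1) * s))^2
    = (real_powser \<beta> ((-1) * s))^2"
proof -
  define r where "r = sqrt s"
  have r2: "r^2 = s" using \<open>s > 0\<close> by (simp add: r_def)
  define x where "x = r *\<^sub>R e3"
  define b c where "b = real_powser \<beta> (- s)" and "c = real_powser \<gamma> (- s)"
  have "so3_killing x = - s" using r2 by (simp add: so3_killing_def x_def)
  then have "rk x e1 = vector [1 - c * r^2, b * r, 0]" "rk x e2 = vector [- b * r, 1 - c * r^2, 0]"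
      "rk x e3 = e3"
    unfolding assms(1) by (simp_all add: x_def vec3_eq_iff power2_eq_square b_def c_def)
  moreover have "rk x (so3_bracket e1 e2) = so3_bracket (rk x e1) (rk x e2)" by (rule rk_bracket_hom)
  moreover have "so3_bracket e1 e2 = e3" by (simp add: vec3_eq_iff)
  ultimately have "(1 - c * r^2)^2 + (b * r)^2 = 1" by (simp add: vec3_eq_iff power2_eq_square)
  then have "r^2 * (c^2 * r^2 - 2 * c + b^2) = 0" by (simp add: power2_eq_square algebra_simps)
  then have "c^2 * s - 2 * c + b^2 = 0" using \<open>s > 0\<close> r2 by simp
  then show ?thesis by (simp add: b_def c_def power2_eq_square algebra_simps)
qed

lemma lin_exp_form:
  "\<exists>F. real_analytic F \<and> F 0 = 1 \<and>
     (\<forall>x y. rk x y = lin_exp (\<lambda>z. F (killing_half so3_bracket x) *\<^sub>R so3_bracket x z) y)"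
proof -
  have "so3_killing e3 \<noteq> 0" "so3_bracket e3 e1 \<noteq> 0" "so3_bracket e3 (so3_bracket e3 e1) \<noteq> 0"
    by (simp_all add: so3_killing_def vec3_eq_iff)
  then obtain \<beta> \<gamma> where "entire_coeffs \<beta>" "entire_coeffs \<gamma>" "\<beta> 0 = 1"
    and expansion: "\<And>x z. rk x z = z + real_powser \<beta> (so3_killing x) *\<^sub>R so3_bracket x z
      + real_powser \<gamma> (so3_killing x) *\<^sub>R so3_bracket x (so3_bracket x z)"
    using rk_ad_expansion[OF linear_so3_bracket hom_part_ad_monomial] by blast
  from lin_exp_form_if_ad_expansion[OF this(1-3) _ powser_relation[OF expansion] expansion
      linear_so3_bracket so3_ad_cubed]
  show ?thesis by (simp add: killing_half_so3)
qed

end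

lemma so3_rack_lin_exp_form:
  assumes "analytic_linear_lie_rack rk" and "rack_bracket_is rk so3_bracket"
  shows "\<exists>F. real_analytic F \<and> F 0 = 1 \<and>
    (\<forall>x y. rk x y = lin_exp (\<lambda>z. F (killing_half so3_bracket x) *\<^sub>R so3_bracket x z) y)"
proof -
  interpret so3_rack rk by unfold_locales (fact assms)+
  show ?thesis by (rule lin_exp_form)
qed

section \<open>The Lie algebra \<open>sl(2)\<close>\<close>

lemma sl2_bracket_components [simp]:
  "sl2_bracket x y $ 1 = x$2 * y$3 - x$3 * y$2"
  "sl2_bracket x y $ 2 = 2 * (x$1 * y$2 - x$2 * y$1)"
  "sl2_bracket x y $ 3 = 2 * (x$3 * y$1 - x$1 * y$3)"
  by (simp_all add: sl2_bracket_def)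

lemma linear_sl2_bracket: "linear (sl2_bracket x)"
  by (rule linearI) (simp_all add: vec3_eq_iff algebra_simps)

lemma sl2_bracket_scaleR: "sl2_bracket (t *\<^sub>R x) z = t *\<^sub>R sl2_bracket x z"
  by (simp add: vec3_eq_iff algebra_simps)

definition sl2_killing :: "real^3 \<Rightarrow> real" where "sl2_killing x = 4 * x$1^2 + 4 * x$2 * x$3"

lemma killing_half_sl2: "killing_half sl2_bracket x = sl2_killing x"
  by (simp add: killing_half_def sl2_killing_def sum_3 axis_def power2_eq_square algebra_simps)

lemma sl2_killing_scaleR: "sl2_killing (t *\<^sub>R x) = t^2 * sl2_killing x"
  by (simp add: sl2_killing_def power_mult_distrib algebra_simps power2_eq_square)

lemma sl2_ad_cubed: "sl2_bracket x (sl2_bracket x (sl2_bracket x z)) = sl2_killing x *\<^sub>R sl2_bracket x z"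
  by (simp add: vec3_eq_iff sl2_killing_def power2_eq_square algebra_simps)

text \<open>In the basis \<open>H, E, F\<close>: \<open>exp_ad_E s = exp (s ad\<^sub>E)\<close>, \<open>exp_ad_F s = exp (s ad\<^sub>F)\<close>, and
  \<open>dilation (exp (2 s)) = exp (s ad\<^sub>H)\<close>.\<close>

definition exp_ad_E :: "real \<Rightarrow> real^3 \<Rightarrow> real^3" where
  "exp_ad_E s x = vector [x$1 + s * x$3, x$2 - 2 * s * x$1 - s^2 * x$3, x$3]"

definition exp_ad_F :: "real \<Rightarrow> real^3 \<Rightarrow> real^3" where
  "exp_ad_F s x = vector [x$1 - s * x$2, x$2, x$3 + 2 * s * x$1 - s^2 * x$2]"

definition dilation :: "real \<Rightarrow> real^3 \<Rightarrow> real^3" where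
  "dilation d x = vector [x$1, d * x$2, x$3 / d]"

lemma exp_ad_E_components [simp]:
  "exp_ad_E s x $ 1 = x$1 + s * x$3" "exp_ad_E s x $ 2 = x$2 - 2 * s * x$1 - s^2 * x$3"
  "exp_ad_E s x $ 3 = x$3"
  by (simp_all add: exp_ad_E_def)

lemma exp_ad_F_components [simp]:
  "exp_ad_F s x $ 1 = x$1 - s * x$2" "exp_ad_F s x $ 2 = x$2"
  "exp_ad_F s x $ 3 = x$3 + 2 * s * x$1 - s^2 * x$2"
  by (simp_all add: exp_ad_F_def)

lemma dilation_components [simp]:
  "dilation d x $ 1 = x$1" "dilation d x $ 2 = d * x$2" "dilation d x $ 3 = x$3 / d"
  by (simp_all add: dilation_def)

lemma linear_exp_ad_E: "linear (exp_ad_E s)"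
  by (rule linearI) (simp_all add: vec3_eq_iff algebra_simps)

lemma linear_exp_ad_F: "linear (exp_ad_F s)"
  by (rule linearI) (simp_all add: vec3_eq_iff algebra_simps)

lemma linear_dilation: "linear (dilation d)"
  by (rule linearI) (simp_all add: vec3_eq_iff algebra_simps add_divide_distrib)

lemma sl2_bracket_exp_ad_E: "sl2_bracket (exp_ad_E s a) (exp_ad_E s b) = exp_ad_E s (sl2_bracket a b)"
  by (simp add: vec3_eq_iff power2_eq_square algebra_simps)

lemma sl2_bracket_exp_ad_F: "sl2_bracket (exp_ad_F s a) (exp_ad_F s b) = exp_ad_F s (sl2_bracket a b)"
  by (simp add: vec3_eq_iff power2_eq_square algebra_simps)

lemma sl2_killing_exp_ad_E: "sl2_killing (exp_ad_E s x) = sl2_killing x"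
  by (simp add: sl2_killing_def power2_eq_square algebra_simps)

lemma sl2_killing_exp_ad_F: "sl2_killing (exp_ad_F s x) = sl2_killing x"
  by (simp add: sl2_killing_def power2_eq_square algebra_simps)

lemma exp_ad_E_inverse: "exp_ad_E (-s) (exp_ad_E s x) = x"
  by (simp add: vec3_eq_iff power2_eq_square algebra_simps)

lemma exp_ad_F_inverse: "exp_ad_F (-s) (exp_ad_F s x) = x"
  by (simp add: vec3_eq_iff power2_eq_square algebra_simps)

lemma surj_exp_ad_E: "surj (exp_ad_E s)"
  by (metis exp_ad_E_inverse minus_minus surjI)

lemma surj_exp_ad_F: "surj (exp_ad_F s)"
  by (metis exp_ad_F_inverse minus_minus surjI)

lemma has_vector_derivative_exp_ad_E:
  "((\<lambda>s. exp_ad_E s y) has_vector_derivative sl2_bracket e2 (exp_ad_E s y)) (at s)"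
proof -
  have "((\<lambda>s. vector [y$1 + s * y$3, y$2 - 2 * s * y$1 - s^2 * y$3, y$3] :: real^3)
      has_vector_derivative vector [y$3, - 2 * y$1 - 2 * s * y$3, 0]) (at s)"
    by (intro has_vector_derivative_vector3 derivative_eq_intros) auto
  moreover have "vector [y$3, - 2 * y$1 - 2 * s * y$3, 0] = sl2_bracket e2 (exp_ad_E s y)"
    by (simp add: vec3_eq_iff algebra_simps)
  ultimately show ?thesis by (simp add: exp_ad_E_def)
qed

lemma has_vector_derivative_exp_ad_F:
  "((\<lambda>s. exp_ad_F s y) has_vector_derivative sl2_bracket e3 (exp_ad_F s y)) (at s)"
proof -
  have "((\<lambda>s. vector [y$1 - s * y$2, y$2, y$3 + 2 * s * y$1 - s^2 * y$2] :: real^3)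
      has_vector_derivative vector [- y$2, 0, 2 * y$1 - 2 * s * y$2]) (at s)"
    by (intro has_vector_derivative_vector3 derivative_eq_intros) auto
  moreover have "vector [- y$2, 0, 2 * y$1 - 2 * s * y$2] = sl2_bracket e3 (exp_ad_F s y)"
    by (simp add: vec3_eq_iff algebra_simps)
  ultimately show ?thesis by (simp add: exp_ad_F_def)
qed

lemma has_vector_derivative_dilation_exp:
  "((\<lambda>s. dilation (exp (2 * s)) y) has_vector_derivative sl2_bracket e1 (dilation (exp (2 * s)) y)) (at s)"
proof -
  have "((\<lambda>s. y$3 * exp (- (2 * s))) has_real_derivative - 2 * y$3 / exp (2 * s)) (at s)"
    by (auto intro!: derivative_eq_intros simp: exp_minus field_simps)
  moreover have "(\<lambda>s. y$3 / exp (2 * s)) = (\<lambda>s. y$3 * exp (- (2 * s)))"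
    by (simp add: exp_minus field_simps)
  ultimately have "((\<lambda>s. vector [y$1, exp (2 * s) * y$2, y$3 / exp (2 * s)] :: real^3)
      has_vector_derivative vector [0, 2 * exp (2 * s) * y$2, - 2 * y$3 / exp (2 * s)]) (at s)"
    by (intro has_vector_derivative_vector3 derivative_eq_intros) auto
  moreover have "vector [0, 2 * exp (2 * s) * y$2, - 2 * y$3 / exp (2 * s)] =
      sl2_bracket e1 (dilation (exp (2 * s)) y)"
    by (simp add: vec3_eq_iff algebra_simps)
  ultimately show ?thesis by (simp add: dilation_def)
qed

text \<open>A linear map commuting with \<open>dilation d\<close> preserves its eigenspaces, the coordinate axes
  (eigenvalues \<open>1, d, 1/d\<close>).\<close>

lemma commute_dilation:
  fixes M :: "real^3 \<Rightarrow> real^3"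
  assumes "linear M" and commute: "\<And>z. M (dilation d z) = dilation d (M z)" and "d > 1"
  obtains a b c where "\<And>z. M z = vector [a * z$1, b * z$2, c * z$3]"
proof -
  have zero: "u = 0" if "u = k * u" "k \<noteq> 1" for u k :: real
    using that by (simp add: mult_cancel_right1)
  have dil: "dilation d e1 = e1" "dilation d e2 = d *\<^sub>R e2" "dilation d e3 = (1/d) *\<^sub>R e3"
    by (simp_all add: vec3_eq_iff)
  have "M e1 = dilation d (M e1)" using commute[of e1] unfolding dil .
  then have "M e1 $ 2 = dilation d (M e1) $ 2" "M e1 $ 3 = dilation d (M e1) $ 3" by simp_all
  then have "M e1 $ 2 = d * M e1 $ 2" "M e1 $ 3 = (1/d) * M e1 $ 3" by simp_all
  moreover have "d \<noteq> 1" "1/d \<noteq> 1" using \<open>d > 1\<close> by simp_all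
  ultimately have "M e1 $ 2 = 0" "M e1 $ 3 = 0" using zero by blast+
  have "d *\<^sub>R M e2 = dilation d (M e2)" using commute[of e2] unfolding dil linear_cmul[OF \<open>linear M\<close>] .
  then have "(d *\<^sub>R M e2) $ 1 = dilation d (M e2) $ 1" "(d *\<^sub>R M e2) $ 3 = dilation d (M e2) $ 3"
    by simp_all
  then have "M e2 $ 1 = (1/d) * M e2 $ 1" "M e2 $ 3 = (1/(d*d)) * M e2 $ 3"
    using \<open>d > 1\<close> by (simp_all add: field_simps)
  moreover have "1/d \<noteq> 1" "1/(d*d) \<noteq> 1" using \<open>d > 1\<close> less_1_mult[of d d] by simp_all
  ultimately have "M e2 $ 1 = 0" "M e2 $ 3 = 0" using zero by blast+
  have "(1/d) *\<^sub>R M e3 = dilation d (M e3)" using commute[of e3] unfolding dil linear_cmul[OF \<open>linear M\<close>] .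
  then have "((1/d) *\<^sub>R M e3) $ 1 = dilation d (M e3) $ 1" "((1/d) *\<^sub>R M e3) $ 2 = dilation d (M e3) $ 2"
    by simp_all
  then have "M e3 $ 1 = d * M e3 $ 1" "M e3 $ 2 = (d*d) * M e3 $ 2"
    using \<open>d > 1\<close> by (simp_all add: field_simps)
  moreover have "d \<noteq> 1" "d*d \<noteq> 1" using \<open>d > 1\<close> less_1_mult[of d d] by simp_all
  ultimately have "M e3 $ 1 = 0" "M e3 $ 2 = 0" using zero by blast+
  have "M z = vector [M e1 $ 1 * z$1, M e2 $ 2 * z$2, M e3 $ 3 * z$3]" for z
    using linear_eq_e123[OF \<open>linear M\<close>, of z] \<open>M e1 $ 2 = 0\<close> \<open>M e1 $ 3 = 0\<close> \<open>M e2 $ 1 = 0\<close>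
      \<open>M e2 $ 3 = 0\<close> \<open>M e3 $ 1 = 0\<close> \<open>M e3 $ 2 = 0\<close>
    by (simp add: vec3_eq_iff)
  then show ?thesis by (rule that)
qed

lemma sl2_orbit_of_H:
  assumes "x$2 \<noteq> 0" and "sl2_killing x > 0"
  obtains s t q where "x = exp_ad_F s (exp_ad_E t (q *\<^sub>R e1))"
proof -
  define q where "q = sqrt (x$1^2 + x$2 * x$3)"
  have "q > 0" "q^2 = x$1^2 + x$2 * x$3" using assms(2) by (simp_all add: q_def sl2_killing_def)
  define s t where "s = (q - x$1) / x$2" and "t = - x$2 / (2 * q)"
  have "q - s * x$2 = x$1" using assms(1) by (simp add: s_def)
  moreover have "- (2 * t * q) = x$2" using \<open>q > 0\<close> by (simp add: t_def)
  moreover have "2 * s * q - s^2 * x$2 = x$3"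
  proof -
    have "2 * s * q - s^2 * x$2 = (q^2 - x$1^2) / x$2"
      using assms(1) by (simp add: s_def field_simps power2_eq_square)
    then show ?thesis using assms(1) \<open>q^2 = x$1^2 + x$2 * x$3\<close> by simp
  qed
  ultimately have "x = exp_ad_F s (exp_ad_E t (q *\<^sub>R e1))"
    by (simp add: vec3_eq_iff algebra_simps)
  then show ?thesis by (rule that)
qed

lemma real_polynomial_function_sl2_ad_monomial:
  "real_polynomial_function (\<lambda>s. ad_monomial sl2_bracket sl2_killing n c (x0 + s *\<^sub>R w) z $ j)"
proof -
  have "j = 1 \<or> j = 2 \<or> j = 3" using exhaust_3 by blast
  with real_polynomial_function_ident show ?thesis
    by (cases "odd n") (auto simp: ad_monomial_def sl2_killing_def
        intro!: real_polynomial_function_diff real_polynomial_function_power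
          real_polynomial_function.intros(2-4))
qed

locale sl2_rack = analytic_rack sl2_bracket rk for rk :: "real^3 \<Rightarrow> real^3 \<Rightarrow> real^3"
begin

lemma rk_exp_ad_E_equivariant: "rk (exp_ad_E s x) (exp_ad_E s z) = exp_ad_E s (rk x z)"
proof (rule rk_equivariant_flow[where g = exp_ad_E and u = e2])
  show "exp_ad_E s (sl2_bracket e2 y) = sl2_bracket e2 (exp_ad_E s y)" for s y
    by (simp add: vec3_eq_iff algebra_simps)
qed (simp_all add: linear_exp_ad_E linear_sl2_bracket has_vector_derivative_exp_ad_E exp_ad_E_inverse
    vec3_eq_iff)

lemma rk_exp_ad_F_equivariant: "rk (exp_ad_F s x) (exp_ad_F s z) = exp_ad_F s (rk x z)"
proof (rule rk_equivariant_flow[where g = exp_ad_F and u = e3])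
  show "exp_ad_F s (sl2_bracket e3 y) = sl2_bracket e3 (exp_ad_F s y)" for s y
    by (simp add: vec3_eq_iff algebra_simps)
qed (simp_all add: linear_exp_ad_F linear_sl2_bracket has_vector_derivative_exp_ad_F exp_ad_F_inverse
    vec3_eq_iff)

lemma rk_dilation_equivariant: "rk (dilation (exp 2) x) (dilation (exp 2) z) = dilation (exp 2) (rk x z)"
proof -
  have "rk (dilation (exp (2 * s)) x) (dilation (exp (2 * s)) z) = dilation (exp (2 * s)) (rk x z)" for s
  proof (rule rk_equivariant_flow[where g = "\<lambda>s. dilation (exp (2 * s))" and u = e1])
    show "dilation (exp (2 * - s)) (dilation (exp (2 * s)) y) = y" for s y
      by (simp add: vec3_eq_iff exp_minus)
    show "dilation (exp (2 * s)) (sl2_bracket e1 y) = sl2_bracket e1 (dilation (exp (2 * s)) y)" for s y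
      by (simp add: vec3_eq_iff algebra_simps)
  qed (simp_all add: linear_dilation linear_sl2_bracket has_vector_derivative_dilation_exp vec3_eq_iff)
  from this[of 1] show ?thesis by simp
qed

lemma rk_line_H_fixes_H: "rk (r *\<^sub>R e1) e1 = e1"
proof -
  define M where "M = rk (r *\<^sub>R e1)"
  have "dilation (exp 2) (r *\<^sub>R e1) = r *\<^sub>R e1" by (simp add: vec3_eq_iff)
  then have "M (dilation (exp 2) z) = dilation (exp 2) (M z)" for z
    using rk_dilation_equivariant[of "r *\<^sub>R e1" z] by (simp add: M_def)
  then obtain a b c where M: "\<And>z. M z = vector [a * z$1, b * z$2, c * z$3]"
    by (rule commute_dilation[OF linear_rk[of "r *\<^sub>R e1", folded M_def] _ exp_gt_one]) auto
  have "M (sl2_bracket e1 e2) = sl2_bracket (M e1) (M e2)"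
    unfolding M_def by (rule rk_bracket_hom)
  then have "b = a * b" by (simp add: M vec3_eq_iff)
  moreover have "e2 \<noteq> 0" by (simp add: vec3_eq_iff)
  then have "M e2 \<noteq> 0" unfolding M_def by simp
  then have "b \<noteq> 0" by (simp add: M vec3_eq_iff)
  ultimately have "a = 1" by simp
  then show ?thesis by (simp add: M_def[symmetric] M vec3_eq_iff)
qed

text \<open>On the line through \<open>H\<close>, the homogeneous parts commute with the dilation, and the Weyl
  element \<open>exp ad\<^sub>E \<circ> exp (-ad\<^sub>F) \<circ> exp ad\<^sub>E\<close> reverses \<open>H\<close> and swaps \<open>E\<close> and \<open>F\<close> up to sign.\<close>

lemma hom_part_H_shape:
  assumes "n \<ge> 1"
  obtains b c where "\<And>z. hom_part n e1 z = vector [0, b * z$2, c * z$3]" and "(-1)^n * c = b"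
proof -
  have "dilation (exp 2) e1 = e1" by (simp add: vec3_eq_iff)
  then have "hom_part n e1 (dilation (exp 2) z) = dilation (exp 2) (hom_part n e1 z)" for z
    using hom_part_equivariant[OF linear_dilation rk_dilation_equivariant, of n e1 z] by simp
  then obtain a b c where M: "\<And>z. hom_part n e1 z = vector [a * z$1, b * z$2, c * z$3]"
    by (rule commute_dilation[OF linear_hom_part _ exp_gt_one]) auto
  have "hom_part n e1 e1 = 0" using hom_part_fixed[OF rk_line_H_fixes_H \<open>n \<ge> 1\<close>] .
  then have "a = 0" by (simp add: M vec3_eq_iff)
  define W where "W x = exp_ad_E 1 (exp_ad_F (-1) (exp_ad_E 1 x))" for x
  have W: "W x = vector [- x$1, - x$3, - x$2]" for x by (simp add: W_def vec3_eq_iff algebra_simps)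
  have "linear W"
    unfolding W_def[abs_def] using linear_compose[OF linear_compose[OF linear_exp_ad_E linear_exp_ad_F]
      linear_exp_ad_E] by (simp add: o_def)
  moreover have "rk (W x) (W z) = W (rk x z)" for x z
    by (simp add: W_def rk_exp_ad_E_equivariant rk_exp_ad_F_equivariant)
  ultimately have "hom_part n (W e1) (W e2) = W (hom_part n e1 e2)" by (rule hom_part_equivariant)
  moreover have "W e1 = - e1" "W e2 = - e3" by (simp_all add: W vec3_eq_iff)
  ultimately have "hom_part n (- e1) (- e3) = W (hom_part n e1 e2)" by simp
  then have "(-1)^n * c = b"
    using linear_neg[OF linear_hom_part] by (simp add: hom_part_uminus M W vec3_eq_iff)
  with M \<open>a = 0\<close> show ?thesis using that by simp
qed

lemma hom_part_H_ad_monomial: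
  assumes "n \<ge> 1"
  obtains c where "\<And>z. hom_part n e1 z = ad_monomial sl2_bracket sl2_killing n c e1 z"
proof -
  obtain b c where M: "\<And>z. hom_part n e1 z = vector [0, b * z$2, c * z$3]" and parity: "(-1)^n * c = b"
    using hom_part_H_shape[OF assms] by blast
  define m where "m = (n - 1) div 2"
  have ad: "ad_monomial sl2_bracket sl2_killing n c' e1 z =
      (c' * 4^m) *\<^sub>R (if odd n then sl2_bracket e1 z else sl2_bracket e1 (sl2_bracket e1 z))" for c' z
    unfolding ad_monomial_def m_def by (simp add: sl2_killing_def)
  show ?thesis
  proof (cases "odd n")
    case True
    with parity have "c = - b" by simp
    then show ?thesis
      using True by (intro that[of "b / (2 * 4^m)"]) (simp add: M ad vec3_eq_iff)
  next
    case False
    with parity have "c = b" by simp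
    then show ?thesis
      using False by (intro that[of "b / (4 * 4^m)"]) (simp add: M ad vec3_eq_iff)
  qed
qed

lemma hom_part_ad_monomial_if_on_ray:
  assumes "\<And>s. s > S \<Longrightarrow>
    \<forall>z. hom_part n (x + s *\<^sub>R w) z = ad_monomial sl2_bracket sl2_killing n c (x + s *\<^sub>R w) z"
  shows "\<forall>z. hom_part n x z = ad_monomial sl2_bracket sl2_killing n c x z"
proof
  fix z
  define f where "f j s = (hom_part n (x + s *\<^sub>R w) z - ad_monomial sl2_bracket sl2_killing n c (x + s *\<^sub>R w) z) $ j"
    for j s
  have "f j 0 = 0" for j
  proof (rule real_polynomial_function_eq_0_if_eq_0_on_ray[of "f j" S])
    show "real_polynomial_function (f j)"
      unfolding f_def[abs_def] vector_minus_component
      by (intro real_polynomial_function_diff real_polynomial_function_hom_part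
          real_polynomial_function_sl2_ad_monomial)
    show "f j s = 0" if "s > S" for s using assms[OF that] by (simp add: f_def)
  qed
  then show "hom_part n x z = ad_monomial sl2_bracket sl2_killing n c x z" by (simp add: f_def vec_eq_iff)
qed

lemma hom_part_ad_monomial_on_H_orbit:
  assumes "n \<ge> 1" and H: "\<forall>z. hom_part n e1 z = ad_monomial sl2_bracket sl2_killing n c e1 z"
    and "x$2 \<noteq> 0" and "sl2_killing x > 0"
  shows "\<forall>z. hom_part n x z = ad_monomial sl2_bracket sl2_killing n c x z"
proof -
  obtain s t q where x: "x = exp_ad_F s (exp_ad_E t (q *\<^sub>R e1))"
    using sl2_orbit_of_H[OF assms(3,4)] .
  have "\<forall>z. hom_part n (q *\<^sub>R e1) z = ad_monomial sl2_bracket sl2_killing n c (q *\<^sub>R e1) z"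
    by (rule hom_part_ad_monomial_scaleR[OF linear_sl2_bracket sl2_bracket_scaleR sl2_killing_scaleR
          assms(1) H])
  from hom_part_ad_monomial_automorphism[where k = sl2_killing, OF linear_exp_ad_E[of t]
      surj_exp_ad_E[of t] rk_exp_ad_E_equivariant[of t] sl2_bracket_exp_ad_E[of t]
      sl2_killing_exp_ad_E[of t] this]
  have "\<forall>z. hom_part n (exp_ad_E t (q *\<^sub>R e1)) z =
      ad_monomial sl2_bracket sl2_killing n c (exp_ad_E t (q *\<^sub>R e1)) z" .
  from hom_part_ad_monomial_automorphism[where k = sl2_killing, OF linear_exp_ad_F[of s]
      surj_exp_ad_F[of s] rk_exp_ad_F_equivariant[of s] sl2_bracket_exp_ad_F[of s]
      sl2_killing_exp_ad_F[of s] this]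
  show ?thesis unfolding x .
qed

lemma sl2_killing_pos_along_H:
  assumes "s > \<bar>x$1\<bar> + \<bar>x$2 * x$3\<bar> + 1"
  shows "sl2_killing (x + s *\<^sub>R e1) > 0"
proof -
  from assms have "x$1 + s \<ge> 1" "x$1 + s > \<bar>x$2 * x$3\<bar>" by linarith+
  moreover have "x$1 + s \<le> (x$1 + s) * (x$1 + s)"
    using mult_left_mono[of 1 "x$1 + s" "x$1 + s"] \<open>x$1 + s \<ge> 1\<close> by simp
  moreover have "- (x$2 * x$3) \<le> \<bar>x$2 * x$3\<bar>" by simp
  ultimately have "(x$1 + s)^2 > - (x$2 * x$3)" unfolding power2_eq_square by linarith
  then show ?thesis by (simp add: sl2_killing_def)
qed

text \<open>The property holds on the line through \<open>H\<close>, hence on its orbit \<open>{x. x$2 \<noteq> 0, k(x) > 0}\<close>,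
  and extends to every \<open>x\<close> along rays entering that set, since both sides are polynomial.\<close>

lemma hom_part_ad_monomial:
  assumes "n \<ge> 1"
  shows "\<exists>c. \<forall>x z. hom_part n x z = ad_monomial sl2_bracket sl2_killing n c x z"
proof -
  obtain c where H: "\<forall>z. hom_part n e1 z = ad_monomial sl2_bracket sl2_killing n c e1 z"
    using hom_part_H_ad_monomial[OF assms] by blast
  note orbit = hom_part_ad_monomial_on_H_orbit[OF assms H]
  have off_E: "\<forall>z. hom_part n x z = ad_monomial sl2_bracket sl2_killing n c x z" if "x$2 \<noteq> 0" for x
  proof (rule hom_part_ad_monomial_if_on_ray[where w = e1 and S = "\<bar>x$1\<bar> + \<bar>x$2 * x$3\<bar> + 1"])
    fix s assume "s > \<bar>x$1\<bar> + \<bar>x$2 * x$3\<bar> + 1"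
    with that show "\<forall>z. hom_part n (x + s *\<^sub>R e1) z = ad_monomial sl2_bracket sl2_killing n c (x + s *\<^sub>R e1) z"
      by (intro orbit sl2_killing_pos_along_H) simp_all
  qed
  have "\<forall>z. hom_part n x z = ad_monomial sl2_bracket sl2_killing n c x z" for x
  proof (cases "x$2 = 0")
    case True
    show ?thesis
    proof (rule hom_part_ad_monomial_if_on_ray[where w = e2 and S = 0])
      fix s :: real assume "s > 0"
      with True show "\<forall>z. hom_part n (x + s *\<^sub>R e2) z = ad_monomial sl2_bracket sl2_killing n c (x + s *\<^sub>R e2) z"
        by (intro off_E) simp
    qed
  qed (rule off_E)
  then show ?thesis by blast
qed

text \<open>Comparing \<open>rk x [E, F] = [rk x E, rk x F]\<close> for \<open>x\<close> on the line through \<open>H\<close>, where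
  \<open>sl2_killing x = s > 0\<close>.\<close>

lemma powser_relation:
  fixes s :: real
  assumes expansion: "\<And>x z. rk x z = z + real_powser \<beta> (sl2_killing x) *\<^sub>R sl2_bracket x z
      + real_powser \<gamma> (sl2_killing x) *\<^sub>R sl2_bracket x (sl2_bracket x z)"
    and "s > 0"
  shows "2 * real_powser \<gamma> (1 * s) + (1 * s) * (real_powser \<gamma> (1 * s))^2 = (real_powser \<beta> (1 * s))^2"
proof -
  define r where "r = sqrt s / 2"
  have r2: "4 * r^2 = s" using \<open>s > 0\<close> by (simp add: r_def power_divide)
  define x where "x = r *\<^sub>R e1"
  define b c where "b = real_powser \<beta> s" and "c = real_powser \<gamma> s"
  have "sl2_killing x = s" using r2 by (simp add: sl2_killing_def x_def)
  then have "rk x e2 = vector [0, 1 + 2 * r * b + 4 * r^2 * c, 0]"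
      "rk x e3 = vector [0, 0, 1 - 2 * r * b + 4 * r^2 * c]" "rk x e1 = e1"
    unfolding expansion by (simp_all add: x_def vec3_eq_iff power2_eq_square b_def c_def)
  moreover have "rk x (sl2_bracket e2 e3) = sl2_bracket (rk x e2) (rk x e3)" by (rule rk_bracket_hom)
  moreover have "sl2_bracket e2 e3 = e1" by (simp add: vec3_eq_iff)
  ultimately have "(1 + 2 * r * b + 4 * r^2 * c) * (1 - 2 * r * b + 4 * r^2 * c) = 1"
    by (simp add: vec3_eq_iff)
  then have "(4 * r^2) * (2 * c + (4 * r^2) * c^2 - b^2) = 0"
    by (simp add: power2_eq_square algebra_simps)
  then have "2 * c + s * c^2 - b^2 = 0" using \<open>s > 0\<close> r2 by simp
  then show ?thesis by (simp add: b_def c_def power2_eq_square algebra_simps)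
qed

lemma lin_exp_form:
  "\<exists>F. real_analytic F \<and> F 0 = 1 \<and>
     (\<forall>x y. rk x y = lin_exp (\<lambda>z. F (killing_half sl2_bracket x) *\<^sub>R sl2_bracket x z) y)"
proof -
  have "sl2_killing e1 \<noteq> 0" "sl2_bracket e1 e2 \<noteq> 0" "sl2_bracket e1 (sl2_bracket e1 e2) \<noteq> 0"
    by (simp_all add: sl2_killing_def vec3_eq_iff)
  then obtain \<beta> \<gamma> where "entire_coeffs \<beta>" "entire_coeffs \<gamma>" "\<beta> 0 = 1"
    and expansion: "\<And>x z. rk x z = z + real_powser \<beta> (sl2_killing x) *\<^sub>R sl2_bracket x z
      + real_powser \<gamma> (sl2_killing x) *\<^sub>R sl2_bracket x (sl2_bracket x z)"
    using rk_ad_expansion[OF linear_sl2_bracket hom_part_ad_monomial] by blast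
  from lin_exp_form_if_ad_expansion[OF this(1-3) _ powser_relation[OF expansion] expansion
      linear_sl2_bracket sl2_ad_cubed]
  show ?thesis by (simp add: killing_half_sl2)
qed

end

lemma sl2_rack_lin_exp_form:
  assumes "analytic_linear_lie_rack rk" and "rack_bracket_is rk sl2_bracket"
  shows "\<exists>F. real_analytic F \<and> F 0 = 1 \<and>
    (\<forall>x y. rk x y = lin_exp (\<lambda>z. F (killing_half sl2_bracket x) *\<^sub>R sl2_bracket x z) y)"
proof -
  interpret sl2_rack rk by unfold_locales (fact assms)+
  show ?thesis by (rule lin_exp_form)
qed

section \<open>Rigidity\<close>

lemma sym_multilin_form_symmetric_bilinear:
  fixes B :: "'a::real_vector \<Rightarrow> 'a \<Rightarrow> real"
  assumes left: "\<And>b. linear (\<lambda>a. B a b)" and right: "\<And>a. linear (B a)" and sym: "\<And>a b. B a b = B b a"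
  shows "sym_multilin_form 2 (\<lambda>xs. B (xs 0) (xs 1))"
  unfolding sym_multilin_form_def
proof (intro conjI allI impI)
  fix xs :: "nat \<Rightarrow> 'a" and i :: nat
  assume "i < 2"
  then consider "i = 0" | "i = 1" by linarith
  then show "linear (\<lambda>t. B ((xs(i := t)) 0) ((xs(i := t)) 1))"
    by cases (simp_all add: left right)
next
  fix xs :: "nat \<Rightarrow> 'a" and q :: "nat \<Rightarrow> nat"
  assume q: "q permutes {..<2}"
  have "q 0 \<in> {..<2}" "q 1 \<in> {..<2}" using permutes_in_image[OF q] by simp_all
  moreover have "q 0 \<noteq> q 1" using permutes_inj[OF q] by (metis injD zero_neq_one)
  ultimately have "(q 0 = 0 \<and> q 1 = 1) \<or> (q 0 = 1 \<and> q 1 = 0)" by auto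
  then show "B ((xs \<circ> q) 0) ((xs \<circ> q) 1) = B (xs 0) (xs 1)" using sym by auto
qed simp

lemma rigid_if_lin_exp_form:
  fixes br :: "real^'n \<Rightarrow> real^'n \<Rightarrow> real^'n" and B :: "real^'n \<Rightarrow> real^'n \<Rightarrow> real"
  assumes lin_exp: "\<And>rk. analytic_linear_lie_rack rk \<Longrightarrow> rack_bracket_is rk br \<Longrightarrow>
      \<exists>F. real_analytic F \<and> F 0 = 1 \<and> (\<forall>x y. rk x y = lin_exp (\<lambda>z. F (killing_half br x) *\<^sub>R br x z) y)"
    and "\<And>b. linear (\<lambda>a. B a b)" and "\<And>a. linear (B a)" and "\<And>a b. B a b = B b a"
    and invariant: "\<And>y a b. B (br y a) b + B a (br y b) = 0"
    and diag: "\<And>x. B x x = killing_half br x"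
  shows "rigid br"
  unfolding rigid_def
proof (intro allI impI)
  fix rk :: "real^'n \<Rightarrow> real^'n \<Rightarrow> real^'n"
  assume "analytic_linear_lie_rack rk \<and> rack_bracket_is rk br"
  then obtain F where F: "real_analytic F" "F 0 = 1"
    "\<forall>x y. rk x y = lin_exp (\<lambda>z. F (killing_half br x) *\<^sub>R br x z) y"
    using lin_exp by blast
  define P where "P xs = B (xs (0::nat)) (xs 1)" for xs
  have "sym_multilin_form 2 P"
    unfolding P_def using assms(2-4) by (rule sym_multilin_form_symmetric_bilinear)
  moreover have "(\<Sum>i<2. P (xs(i := br y (xs i)))) = 0" for y xs
    using invariant[of y "xs 0" "xs 1"] by (simp add: P_def numeral_2_eq_2)
  moreover have "rk x y = lin_exp (\<lambda>z. F (P (\<lambda>_. x)) *\<^sub>R br x z) y" for x y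
    using F(3) by (simp add: P_def diag)
  ultimately show "\<exists>F p P. real_analytic F \<and> F 0 = 1 \<and> sym_multilin_form p P \<and>
      (\<forall>y xs. (\<Sum>i<p. P (xs(i := br y (xs i)))) = 0) \<and>
      (\<forall>x y. rk x y = lin_exp (\<lambda>z. F (P (\<lambda>_. x)) *\<^sub>R br x z) y)"
    using F(1,2) by blast
qed

definition so3_killing_form :: "real^3 \<Rightarrow> real^3 \<Rightarrow> real" where
  "so3_killing_form a b = - (a$1 * b$1 + a$2 * b$2 + a$3 * b$3)"

definition sl2_killing_form :: "real^3 \<Rightarrow> real^3 \<Rightarrow> real" where
  "sl2_killing_form a b = 4 * a$1 * b$1 + 2 * (a$2 * b$3 + a$3 * b$2)"

lemma rigid_so3: "rigid so3_bracket"
proof (rule rigid_if_lin_exp_form[OF so3_rack_lin_exp_form, where B = so3_killing_form])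
  show "linear (\<lambda>a. so3_killing_form a b)" "linear (so3_killing_form a)" for a b
    by (rule linearI; simp add: so3_killing_form_def algebra_simps)+
qed (simp_all add: so3_killing_form_def killing_half_so3 so3_killing_def power2_eq_square algebra_simps)

lemma rigid_sl2: "rigid sl2_bracket"
proof (rule rigid_if_lin_exp_form[OF sl2_rack_lin_exp_form, where B = sl2_killing_form])
  show "linear (\<lambda>a. sl2_killing_form a b)" "linear (sl2_killing_form a)" for a b
    by (rule linearI; simp add: sl2_killing_form_def algebra_simps)+
qed (simp_all add: sl2_killing_form_def killing_half_sl2 sl2_killing_def power2_eq_square algebra_simps)

theorem theorem3:
  fixes br :: "real^3 \<Rightarrow> real^3 \<Rightarrow> real^3"
  assumes "br = sl2_bracket \<or> br = so3_bracket"
  shows "(\<forall>rk. analytic_linear_lie_rack rk \<and> rack_bracket_is rk br \<longrightarrow>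
            (\<exists>F. real_analytic F \<and> F 0 = 1 \<and>
               (\<forall>x y. rk x y = lin_exp (\<lambda>z. F (killing_half br x) *\<^sub>R br x z) y)))
         \<and> rigid br"
  using assms sl2_rack_lin_exp_form so3_rack_lin_exp_form rigid_sl2 rigid_so3 by blast

end
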